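(* Let $(M,\Delta,S)$ be a generalized counital $C^*$-bialgebra with target and source Cartan subalgebras $N_t$, $N_s$. Let $\theta_t$ be the trace of the left regular representation of $N_t$ (i.e. $\theta_t(n)=\mathrm{Tr}(m\mapsto nm)$ on $N_t$) and put $\varepsilon:=\theta_t\circ\varepsilon_t:M\to\mathbb{C}$. Then $(M,\Delta,S,\varepsilon)$ is a weak Kac algebra if and only if $(\mathrm{id}\otimes\varepsilon)\circ\Delta=\mathrm{id}$.
   Context: All algebras are finite-dimensional over $\mathbb{C}$; $\varsigma$ denotes the flip and $\mu(x\otimes y)=xy$. A generalized coinvolutive $C^*$-bialgebra is a triple $(M,\Delta,S)$ where $M$ is a finite-dimensional $C^*$-algebra; $\Delta:M\to M\otimes M$ is an injective, not necessarily unital, $*$-homomorphism with $(\Delta\otimes\mathrm{id})\Delta=(\mathrm{id}\otimes\Delta)\Delta$; and $S:M\to M$ is a linear, unital, antimultiplicative, $*$-preserving bijection with $S^2=\mathrm{id}$ and $(S\otimes S)\circ\Delta=\varsigma\circ\Delta\circ S$. Let $e=\Delta(1)$, $N_t=\{x:\Delta(x)=e(x\otimes1)=(x\otimes1)e\}$, $N_s=\{x:\Delta(x)=e(1\otimes x)=(1\otimes x)e\}$, $\varepsilon_t=\mu(\mathrm{id}\otimes S)\Delta$, $\varepsilon_s=\mu(S\otimes\mathrm{id})\Delta$. It is called counital if $\varepsilon_t(1)=1$, $\varepsilon_t(M)\subset N_t$, and $(\mathrm{id}\otimes\varepsilon_t)\Delta(x)=e(x\otimes1)$ for all $x\in N_s$.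 A weak Kac algebra is a quadruple $(M,\Delta,S,\varepsilon)$ with $(M,\Delta,S)$ a generalized coinvolutive $C^*$-bialgebra and $\varepsilon:M\to\mathbb{C}$ linear with $(\varepsilon\otimes\mathrm{id})\Delta=(\mathrm{id}\otimes\varepsilon)\Delta=\mathrm{id}$, $\varepsilon\circ S=\varepsilon$, $\varepsilon(x^* )=\overline{\varepsilon(x)}$, $(\varepsilon\otimes\varepsilon)((x\otimes1)e(1\otimes y))=\varepsilon(xy)$ for all $x,y$, and $(\varepsilon_s\otimes\mathrm{id})\Delta(x)=(1\otimes x)e$ for all $x$. *)

theory Defs
  imports "HOL-Analysis.Analysis"
begin

text \<open>A finite-dimensional C*-algebra is represented (up to *-isomorphism) as a unital
  *-subalgebra M of the full matrix algebra complex^'n^'n. The algebraic tensor product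
  M \<otimes> M is realised inside complex^('n\<times>'n)^('n\<times>'n) via the Kronecker product.\<close>

definition cscale :: "complex \<Rightarrow> complex^'a::finite^'b::finite \<Rightarrow> complex^'a::finite^'b::finite" where
  "cscale c A = (\<chi> i j. c * A$i$j)"

definition adj :: "complex^'a::finite^'a::finite \<Rightarrow> complex^'a::finite^'a::finite" where
  "adj A = (\<chi> i j. cnj (A$j$i))"

definition kron :: "complex^'a::finite^'a::finite \<Rightarrow> complex^'b::finite^'b::finite \<Rightarrow> complex^('a::finite\<times>'b::finite)^('a::finite\<times>'b::finite)" where
  "kron A B = (\<chi> p q. A$(fst p)$(fst q) * B$(snd p)$(snd q))"

definition flip :: "complex^('a::finite\<times>'b::finite)^('a::finite\<times>'b::finite) \<Rightarrow> complex^('b::finite\<times>'a::finite)^('b::finite\<times>'a::finite)" where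
  "flip X = (\<chi> p q. X$(prod.swap p)$(prod.swap q))"

definition reassoc_idx :: "'a::finite\<times>('b::finite\<times>'c::finite) \<Rightarrow> ('a::finite\<times>'b::finite)\<times>'c::finite" where
  "reassoc_idx p = ((fst p, fst (snd p)), snd (snd p))"

definition rassoc ::
  "complex^(('a::finite\<times>'b::finite)\<times>'c::finite)^(('a::finite\<times>'b::finite)\<times>'c::finite) \<Rightarrow> complex^('a::finite\<times>('b::finite\<times>'c::finite))^('a::finite\<times>('b::finite\<times>'c::finite))" where
  "rassoc X = (\<chi> p q. X$(reassoc_idx p)$(reassoc_idx q))"

definition is_star_subalg :: "(complex^'n^'n) set \<Rightarrow> bool" where
  "is_star_subalg M \<longleftrightarrow> 0 \<in> M \<and> mat 1 \<in> M \<and>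
     (\<forall>x\<in>M. \<forall>y\<in>M. x + y \<in> M \<and> x ** y \<in> M) \<and>
     (\<forall>c. \<forall>x\<in>M. cscale c x \<in> M) \<and> (\<forall>x\<in>M. adj x \<in> M)"

definition tensor_space :: "(complex^'a::finite^'a::finite) set \<Rightarrow> (complex^'b::finite^'b::finite) set \<Rightarrow> (complex^('a::finite\<times>'b::finite)^('a::finite\<times>'b::finite)) set" where
  "tensor_space M N = {(\<Sum>i<k. kron (a i) (b i)) | (k::nat) a b. \<forall>i<k. a i \<in> M \<and> b i \<in> N}"

text \<open>The linear map on M \<otimes> N induced by a bilinear map h on M \<times> N:
  a \<otimes> b \<mapsto> h a b (well defined for bilinear h).\<close>
definition tensor_ext :: "(complex^'a::finite^'a::finite) set \<Rightarrow> (complex^'b::finite^'b::finite) set \<Rightarrow>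
    (complex^'a::finite^'a::finite \<Rightarrow> complex^'b::finite^'b::finite \<Rightarrow> 'c::comm_monoid_add) \<Rightarrow> complex^('a::finite\<times>'b::finite)^('a::finite\<times>'b::finite) \<Rightarrow> 'c" where
  "tensor_ext M N h X = (SOME Y. \<exists>(k::nat) a b. (\<forall>i<k. a i \<in> M \<and> b i \<in> N) \<and>
      X = (\<Sum>i<k. kron (a i) (b i)) \<and> Y = (\<Sum>i<k. h (a i) (b i)))"

definition clinear_on :: "(complex^'a::finite^'a::finite) set \<Rightarrow> (complex^'a::finite^'a::finite \<Rightarrow> complex^'b::finite^'b::finite) \<Rightarrow> bool" where
  "clinear_on M f \<longleftrightarrow> (\<forall>x\<in>M. \<forall>y\<in>M. f (x + y) = f x + f y) \<and>
      (\<forall>c. \<forall>x\<in>M. f (cscale c x) = cscale c (f x))"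

definition cfunctional_on :: "(complex^'a::finite^'a::finite) set \<Rightarrow> (complex^'a::finite^'a::finite \<Rightarrow> complex) \<Rightarrow> bool" where
  "cfunctional_on M f \<longleftrightarrow> (\<forall>x\<in>M. \<forall>y\<in>M. f (x + y) = f x + f y) \<and>
      (\<forall>c. \<forall>x\<in>M. f (cscale c x) = c * f x)"

definition cbasis :: "(complex^'a::finite^'a::finite) set \<Rightarrow> (complex^'a::finite^'a::finite) list \<Rightarrow> bool" where
  "cbasis V bs \<longleftrightarrow> set bs \<subseteq> V \<and>
     (\<forall>c. (\<Sum>i<length bs. cscale (c i) (bs!i)) = 0 \<longrightarrow> (\<forall>i<length bs. c i = 0)) \<and>
     V = {(\<Sum>i<length bs. cscale (c i) (bs!i)) | c. True}"

definition lin_trace :: "(complex^'a::finite^'a::finite) set \<Rightarrow> (complex^'a::finite^'a::finite \<Rightarrow> complex^'a::finite^'a::finite) \<Rightarrow> complex" where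
  "lin_trace V L = (THE t. \<forall>bs c. cbasis V bs \<and>
      (\<forall>i<length bs. L (bs!i) = (\<Sum>j<length bs. cscale (c i j) (bs!j))) \<longrightarrow>
      t = (\<Sum>i<length bs. c i i))"

context
  fixes M :: "(complex^'n::finite^'n) set"
    and \<Delta> :: "complex^'n^'n \<Rightarrow> complex^('n\<times>'n)^('n\<times>'n)"
    and S :: "complex^'n^'n \<Rightarrow> complex^'n^'n"
begin

definition unit_e :: "complex^('n\<times>'n)^('n\<times>'n)" where
  "unit_e = \<Delta> (mat 1)"

definition N_t :: "(complex^'n^'n) set" where
  "N_t = {x\<in>M. \<Delta> x = unit_e ** kron x (mat 1) \<and> \<Delta> x = kron x (mat 1) ** unit_e}"

definition N_s :: "(complex^'n^'n) set" where
  "N_s = {x\<in>M. \<Delta> x = unit_e ** kron (mat 1) x \<and> \<Delta> x = kron (mat 1) x ** unit_e}"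

definition eps_t :: "complex^'n^'n \<Rightarrow> complex^'n^'n" where
  "eps_t x = tensor_ext M M (\<lambda>a b. a ** S b) (\<Delta> x)"

definition eps_s :: "complex^'n^'n \<Rightarrow> complex^'n^'n" where
  "eps_s x = tensor_ext M M (\<lambda>a b. S a ** b) (\<Delta> x)"

definition gen_coinv_bialg :: bool where
  "gen_coinv_bialg \<longleftrightarrow> is_star_subalg M \<and>
     clinear_on M \<Delta> \<and> (\<forall>x\<in>M. \<Delta> x \<in> tensor_space M M) \<and> inj_on \<Delta> M \<and>
     (\<forall>x\<in>M. \<forall>y\<in>M. \<Delta> (x ** y) = \<Delta> x ** \<Delta> y) \<and> (\<forall>x\<in>M. \<Delta> (adj x) = adj (\<Delta> x)) \<and>
     (\<forall>x\<in>M. rassoc (tensor_ext M M (\<lambda>a b. kron (\<Delta> a) b) (\<Delta> x))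
              = tensor_ext M M (\<lambda>a b. kron a (\<Delta> b)) (\<Delta> x)) \<and>
     clinear_on M S \<and> bij_betw S M M \<and> S (mat 1) = mat 1 \<and>
     (\<forall>x\<in>M. \<forall>y\<in>M. S (x ** y) = S y ** S x) \<and> (\<forall>x\<in>M. S (adj x) = adj (S x)) \<and>
     (\<forall>x\<in>M. S (S x) = x) \<and>
     (\<forall>x\<in>M. tensor_ext M M (\<lambda>a b. kron (S a) (S b)) (\<Delta> x) = flip (\<Delta> (S x)))"

definition counital :: bool where
  "counital \<longleftrightarrow> eps_t (mat 1) = mat 1 \<and> eps_t ` M \<subseteq> N_t \<and>
     (\<forall>x\<in>N_s. tensor_ext M M (\<lambda>a b. kron a (eps_t b)) (\<Delta> x) = unit_e ** kron x (mat 1))"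

definition weak_kac :: "(complex^'n^'n \<Rightarrow> complex) \<Rightarrow> bool" where
  "weak_kac \<epsilon> \<longleftrightarrow> gen_coinv_bialg \<and> cfunctional_on M \<epsilon> \<and>
     (\<forall>x\<in>M. tensor_ext M M (\<lambda>a b. cscale (\<epsilon> a) b) (\<Delta> x) = x) \<and>
     (\<forall>x\<in>M. tensor_ext M M (\<lambda>a b. cscale (\<epsilon> b) a) (\<Delta> x) = x) \<and>
     (\<forall>x\<in>M. \<epsilon> (S x) = \<epsilon> x) \<and> (\<forall>x\<in>M. \<epsilon> (adj x) = cnj (\<epsilon> x)) \<and>
     (\<forall>x\<in>M. \<forall>y\<in>M. tensor_ext M M (\<lambda>a b. \<epsilon> a * \<epsilon> b)
                         (kron x (mat 1) ** unit_e ** kron (mat 1) y) = \<epsilon> (x ** y)) \<and>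
     (\<forall>x\<in>M. tensor_ext M M (\<lambda>a b. kron (eps_s a) b) (\<Delta> x) = kron (mat 1) x ** unit_e)"

definition theta_t :: "complex^'n^'n \<Rightarrow> complex" where
  "theta_t n = lin_trace N_t (\<lambda>m. n ** m)"

definition canonical_eps :: "complex^'n^'n \<Rightarrow> complex" where
  "canonical_eps x = theta_t (eps_t x)"

end

end

(*
  One implication is part of the definition of a weak Kac algebra.
  Conversely, assume the right counit property x = eps(x_(2)) x_(1) (Sweedler notation).
  Since Delta(S x) is the flip of (S (x) S) Delta(x), applying it to S x gives
  x = eps(S x_(1)) x_(2); evaluating eps on the two resulting expansions of S x shows
  eps o S = eps, and then the left counit property follows.

  Counitality yields a decomposition e = sum_i p_i (x) q_i with p_i in N_s and q_i in N_t,
  and the right counit property for S z in N_s, whose coproduct is (1 (x) S z) e, turns it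
  into the dual basis formula S z = sum_i theta_t(q_i z) p_i for z in N_t. Combined with
  eps_t(x y) = x_(1) eps_t(y) S(x_(2)) and the trace property theta_t(a b) = theta_t(b a),
  this formula gives the remaining axioms: theta_t is *-preserving, eps(x e y) = eps(x y),
  eps_t(v) = sum_i eps(p_i v) q_i and eps_s(y) = sum_i eps(y q_i) p_i, the last of which
  is equivalent to (eps_s (x) id) Delta(x) = (1 (x) x) e.
*)

theory Submission
  imports Defs
begin

section \<open>Matrix identities\<close>

lemma cscale_nth [simp]: "cscale c A $ i $ j = c * A $ i $ j"
  by (simp add: cscale_def)

lemma adj_nth [simp]: "adj A $ i $ j = cnj (A $ j $ i)"
  by (simp add: adj_def)

lemma kron_nth [simp]: "kron A B $ p $ q = A $ fst p $ fst q * B $ snd p $ snd q"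
  by (simp add: kron_def)

lemma flip_nth [simp]: "flip X $ p $ q = X $ prod.swap p $ prod.swap q"
  by (simp add: flip_def)

interpretation cv: vector_space "cscale :: complex \<Rightarrow> complex^'a::finite^'b::finite \<Rightarrow> _"
  by unfold_locales (simp_all add: vec_eq_iff ring_distribs)

lemma cscale_mult_left: "cscale c A ** B = cscale c (A ** B)"
  by (simp add: vec_eq_iff matrix_matrix_mult_def sum_distrib_left mult.assoc)

lemma cscale_mult_right: "A ** cscale c B = cscale c (A ** B)"
  by (simp add: vec_eq_iff matrix_matrix_mult_def sum_distrib_left mult_ac)

lemma matrix_add_rdistrib: "(A + B) ** C = A ** C + B ** (C :: 'a::semiring_1^'p^'n)"
  by (simp add: vec_eq_iff matrix_matrix_mult_def sum.distrib ring_distribs)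

lemma matrix_sum_mult: "sum f I ** C = (\<Sum>i\<in>I. f i ** C)"
  by (induct I rule: infinite_finite_induct) (auto simp: matrix_add_rdistrib)

lemma matrix_mult_sum: "C ** sum f I = (\<Sum>i\<in>I. C ** f i)"
  by (induct I rule: infinite_finite_induct) (auto simp: matrix_add_ldistrib)

lemma kron_add_left: "kron (A + B) C = kron A C + kron B C"
  by (simp add: vec_eq_iff ring_distribs)

lemma kron_add_right: "kron A (B + C) = kron A B + kron A C"
  by (simp add: vec_eq_iff ring_distribs)

lemma kron_cscale_left: "kron (cscale c A) B = cscale c (kron A B)"
  by (simp add: vec_eq_iff mult.assoc)

lemma kron_cscale_right: "kron A (cscale c B) = cscale c (kron A B)"
  by (simp add: vec_eq_iff mult_ac)

lemma kron_zero_left [simp]: "kron 0 B = 0"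
  and kron_zero_right [simp]: "kron A 0 = 0"
  by (simp_all add: vec_eq_iff)

lemma kron_minus_right: "kron A (- B) = - kron A B"
  by (simp add: vec_eq_iff)

lemma kron_sum_left: "kron (sum f I) B = (\<Sum>i\<in>I. kron (f i) B)"
  by (induct I rule: infinite_finite_induct) (auto simp: kron_add_left vec_eq_iff)

lemma kron_sum_right: "kron A (sum f I) = (\<Sum>i\<in>I. kron A (f i))"
  by (induct I rule: infinite_finite_induct) (auto simp: kron_add_right vec_eq_iff)

lemma kron_mult: "kron A B ** kron C D = kron (A ** C) (B ** D)"
  by (simp add: vec_eq_iff matrix_matrix_mult_def sum_product mult_ac case_prod_beta
      sum.cartesian_product flip: UNIV_Times_UNIV)

lemma kron_one: "kron (mat 1 :: complex^'a::finite^'a) (mat 1 :: complex^'b::finite^'b) = mat 1"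
  by (auto simp: vec_eq_iff mat_def prod_eq_iff)

lemma sum_kron_mult_kron:
  "(\<Sum>i\<in>I. kron (a i) (b i)) ** kron u v = (\<Sum>i\<in>I. kron (a i ** u) (b i ** v))"
  by (simp add: matrix_sum_mult kron_mult)

lemma kron_mult_sum_kron:
  "kron u v ** (\<Sum>i\<in>I. kron (a i) (b i)) = (\<Sum>i\<in>I. kron (u ** a i) (v ** b i))"
  by (simp add: matrix_mult_sum kron_mult)

lemma adj_add: "adj (A + B) = adj A + adj B"
  by (simp add: vec_eq_iff)

lemma adj_cscale: "adj (cscale c A) = cscale (cnj c) (adj A)"
  by (simp add: vec_eq_iff)

lemma adj_adj [simp]: "adj (adj A) = A"
  by (simp add: vec_eq_iff)

lemma adj_mult: "adj (A ** B) = adj B ** adj A"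
  by (simp add: vec_eq_iff matrix_matrix_mult_def mult.commute)

lemma adj_sum: "adj (sum f I) = (\<Sum>i\<in>I. adj (f i))"
  by (induct I rule: infinite_finite_induct) (auto simp: adj_add vec_eq_iff)

lemma adj_one [simp]: "adj (mat 1) = mat 1"
  by (simp add: vec_eq_iff mat_def)

lemma adj_kron: "adj (kron A B) = kron (adj A) (adj B)"
  by (simp add: vec_eq_iff)

lemma flip_flip [simp]: "flip (flip X) = X"
  by (simp add: vec_eq_iff)

lemma flip_kron [simp]: "flip (kron A B) = kron B A"
  by (simp add: vec_eq_iff mult.commute)

lemma flip_sum: "flip (sum f I) = (\<Sum>i\<in>I. flip (f i))"
  by (induct I rule: infinite_finite_induct) (auto simp: vec_eq_iff)

lemma flip_mult: "flip (X ** Y) = flip X ** flip Y"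
proof -
  have "(\<Sum>k\<in>UNIV. X $ prod.swap i $ k * Y $ k $ prod.swap j) =
        (\<Sum>k\<in>UNIV. X $ prod.swap i $ prod.swap k * Y $ prod.swap k $ prod.swap j)" for i j
    by (rule sum.reindex_bij_betw[symmetric, where h = prod.swap]) (auto simp: bij_betw_def)
  then show ?thesis by (simp add: vec_eq_iff matrix_matrix_mult_def)
qed

lemma flip_eq_iff: "flip X = Y \<longleftrightarrow> X = flip Y"
  by auto

lemma mult_commuting_idempotent:
  fixes e X Y :: "'a::semiring_1^'n^'n"
  assumes "e ** e = e" "X ** e = e ** X" "Y ** e = e ** Y"
  shows "(X ** e) ** (e ** Y) = e ** (X ** Y)" and "(X ** e) ** (e ** Y) = (X ** Y) ** e"
  using assms by (metis matrix_mul_assoc)+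

section \<open>Bilinear maps on the algebraic tensor product\<close>

definition cbilinear_form_on ::
    "(complex^'a::finite^'a) set \<Rightarrow> (complex^'b::finite^'b) set \<Rightarrow>
     (complex^'a^'a \<Rightarrow> complex^'b^'b \<Rightarrow> complex) \<Rightarrow> bool" where
  "cbilinear_form_on A B h \<longleftrightarrow>
     (\<forall>b\<in>B. cfunctional_on A (\<lambda>a. h a b)) \<and> (\<forall>a\<in>A. cfunctional_on B (h a))"

definition cbilinear_on ::
    "(complex^'a::finite^'a) set \<Rightarrow> (complex^'b::finite^'b) set \<Rightarrow>
     (complex^'a^'a \<Rightarrow> complex^'b^'b \<Rightarrow> complex^'p::finite^'q::finite) \<Rightarrow> bool" where
  "cbilinear_on A B h \<longleftrightarrow>
     (\<forall>a\<in>A. \<forall>a'\<in>A. \<forall>b\<in>B. h (a + a') b = h a b + h a' b) \<and>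
     (\<forall>c. \<forall>a\<in>A. \<forall>b\<in>B. h (cscale c a) b = cscale c (h a b)) \<and>
     (\<forall>a\<in>A. \<forall>b\<in>B. \<forall>b'\<in>B. h a (b + b') = h a b + h a b') \<and>
     (\<forall>c. \<forall>a\<in>A. \<forall>b\<in>B. h a (cscale c b) = cscale c (h a b))"

lemma cfunctional_on_zero: "cv.subspace V \<Longrightarrow> cfunctional_on V f \<Longrightarrow> f 0 = 0"
  unfolding cfunctional_on_def by (metis cv.scale_zero_left cv.subspace_0 mult_zero_left)

lemma clinear_on_zero: "cv.subspace V \<Longrightarrow> clinear_on V f \<Longrightarrow> f 0 = 0"
  unfolding clinear_on_def by (metis cv.scale_zero_left cv.subspace_0)

lemma cfunctional_on_sum:
  assumes V: "cv.subspace V" and f: "cfunctional_on V f" and x: "\<And>i. i \<in> I \<Longrightarrow> x i \<in> V"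
  shows "f (\<Sum>i\<in>I. cscale (c i) (x i)) = (\<Sum>i\<in>I. c i * f (x i))"
  using x
proof (induct I rule: infinite_finite_induct)
  case (insert i I)
  have "(\<Sum>i\<in>I. cscale (c i) (x i)) \<in> V" "cscale (c i) (x i) \<in> V"
    using insert by (auto intro!: cv.subspace_sum[OF V] cv.subspace_scale[OF V])
  with insert f show ?case by (simp add: cfunctional_on_def)
qed (simp_all add: cfunctional_on_zero[OF V f])

lemma clinear_on_sum:
  assumes V: "cv.subspace V" and f: "clinear_on V f" and x: "\<And>i. i \<in> I \<Longrightarrow> x i \<in> V"
  shows "f (\<Sum>i\<in>I. cscale (c i) (x i)) = (\<Sum>i\<in>I. cscale (c i) (f (x i)))"
  using x
proof (induct I rule: infinite_finite_induct)
  case (insert i I)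
  have "(\<Sum>i\<in>I. cscale (c i) (x i)) \<in> V" "cscale (c i) (x i) \<in> V"
    using insert by (auto intro!: cv.subspace_sum[OF V] cv.subspace_scale[OF V])
  with insert f show ?case by (simp add: clinear_on_def)
qed (simp_all add: clinear_on_zero[OF V f])

lemma clinear_on_id: "clinear_on A (\<lambda>x. x)"
  unfolding clinear_on_def by simp

lemma clinear_on_subset: "clinear_on A f \<Longrightarrow> B \<subseteq> A \<Longrightarrow> clinear_on B f"
  unfolding clinear_on_def by blast

lemma cbilinear_on_mult:
  "clinear_on A f \<Longrightarrow> clinear_on B g \<Longrightarrow> cbilinear_on A B (\<lambda>a b. f a ** g b)"
  unfolding cbilinear_on_def clinear_on_def
  by (simp add: matrix_add_ldistrib matrix_add_rdistrib cscale_mult_left cscale_mult_right)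

lemma cbilinear_on_kron:
  "clinear_on A f \<Longrightarrow> clinear_on B g \<Longrightarrow> cbilinear_on A B (\<lambda>a b. kron (f a) (g b))"
  unfolding cbilinear_on_def clinear_on_def
  by (simp add: kron_add_left kron_add_right kron_cscale_left kron_cscale_right)

lemma cbilinear_on_cscale_left:
  "cfunctional_on A \<phi> \<Longrightarrow> clinear_on B f \<Longrightarrow> cbilinear_on A B (\<lambda>a b. cscale (\<phi> a) (f b))"
  unfolding cbilinear_on_def clinear_on_def cfunctional_on_def
  by (simp add: cv.scale_left_distrib cv.scale_right_distrib mult.commute)

lemma cbilinear_on_cscale_right:
  "clinear_on A f \<Longrightarrow> cfunctional_on B \<phi> \<Longrightarrow> cbilinear_on A B (\<lambda>a b. cscale (\<phi> b) (f a))"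
  unfolding cbilinear_on_def clinear_on_def cfunctional_on_def
  by (simp add: cv.scale_left_distrib cv.scale_right_distrib mult.commute)

lemma cbilinear_form_on_mult:
  "cfunctional_on A \<phi> \<Longrightarrow> cfunctional_on B \<psi> \<Longrightarrow> cbilinear_form_on A B (\<lambda>a b. \<phi> a * \<psi> b)"
  unfolding cbilinear_form_on_def cfunctional_on_def by (simp add: ring_distribs)

lemma cbilinear_on_entry:
  "cbilinear_on A B h \<Longrightarrow> cbilinear_form_on A B (\<lambda>a b. h a b $ r $ s)"
  unfolding cbilinear_on_def cbilinear_form_on_def cfunctional_on_def by auto

lemma cbilinear_form_on_left: "cbilinear_form_on A B h \<Longrightarrow> b \<in> B \<Longrightarrow> cfunctional_on A (\<lambda>a. h a b)"
  and cbilinear_form_on_right: "cbilinear_form_on A B h \<Longrightarrow> a \<in> A \<Longrightarrow> cfunctional_on B (h a)"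
  unfolding cbilinear_form_on_def by blast+

lemma sum_cscale_eq_zero_solve:
  assumes "finite I" "j \<in> I" "c j \<noteq> 0" "(\<Sum>i\<in>I. cscale (c i) (x i)) = 0"
  shows "x j = (\<Sum>i\<in>I - {j}. cscale (- c i / c j) (x i))"
proof -
  have "cscale (c j) (x j) = - (\<Sum>i\<in>I - {j}. cscale (c i) (x i))"
    using assms(1,2,4) by (simp add: sum.remove eq_neg_iff_add_eq_0)
  then have "x j = cscale (inverse (c j)) (- (\<Sum>i\<in>I - {j}. cscale (c i) (x i)))"
    using assms(3) by (metis cv.scale_one cv.scale_scale left_inverse)
  then show ?thesis by (simp add: cv.scale_sum_right divide_inverse_commute sum_negf)
qed

lemma sum_kron_eq_zero_independent:
  fixes a b :: "'i \<Rightarrow> _"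
  assumes indep: "\<forall>c. (\<Sum>i\<in>I. cscale (c i) (a i)) = 0 \<longrightarrow> (\<forall>i\<in>I. c i = 0)"
    and zero: "(\<Sum>i\<in>I. kron (a i) (b i)) = 0" and i: "i \<in> I"
  shows "b i = 0"
proof -
  have "(\<Sum>i\<in>I. cscale (b i $ r $ s) (a i)) = 0" for r s
  proof -
    have "(\<Sum>i\<in>I. kron (a i) (b i)) $ (r', r) $ (s', s) = 0" for r' s'
      using zero by simp
    then show ?thesis by (simp add: vec_eq_iff mult.commute)
  qed
  then have "b i $ r $ s = 0" for r s
    using indep[rule_format, of "\<lambda>i. b i $ r $ s"] i by blast
  then show ?thesis by (simp add: vec_eq_iff)
qed

text \<open>If the \<open>a i\<close> are linearly
  independent, comparing entries of \<open>\<Sum>i. a i \<otimes> b i = 0\<close> forces every \<open>b i = 0\<close>; otherwise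
  some \<open>a j = \<Sum>i\<noteq>j. d i a i\<close>, and replacing \<open>b i\<close> by \<open>b i + d i b j\<close> removes the \<open>j\<close>-th term.\<close>

lemma cbilinear_form_sum_kron_eq_zero:
  fixes a b :: "'i \<Rightarrow> _"
  assumes A: "cv.subspace A" and B: "cv.subspace B" and h: "cbilinear_form_on A B h"
  shows "finite I \<Longrightarrow> \<forall>i\<in>I. a i \<in> A \<and> b i \<in> B \<Longrightarrow> (\<Sum>i\<in>I. kron (a i) (b i)) = 0
     \<Longrightarrow> (\<Sum>i\<in>I. h (a i) (b i)) = 0"
proof (induction "card I" arbitrary: I b rule: less_induct)
  case (less I b)
  note h_left = cbilinear_form_on_left[OF h] and h_right = cbilinear_form_on_right[OF h]
  show ?case
  proof (cases "\<forall>c. (\<Sum>i\<in>I. cscale (c i) (a i)) = 0 \<longrightarrow> (\<forall>i\<in>I. c i = 0)")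
    case True
    have "b i = 0" if "i \<in> I" for i
      by (rule sum_kron_eq_zero_independent[OF True less(4) that])
    then show ?thesis
      using less(3) cfunctional_on_zero[OF B h_right] by simp
  next
    case False
    then obtain c j where j: "j \<in> I" "c j \<noteq> 0" and c: "(\<Sum>i\<in>I. cscale (c i) (a i)) = 0"
      by blast
    define J where "J = I - {j}"
    define d where "d i = - c i / c j" for i
    have split: "(\<Sum>i\<in>I. f i) = f j + (\<Sum>i\<in>J. f i)" for f :: "'i \<Rightarrow> 'z::comm_monoid_add"
      using j less(2) unfolding J_def by (simp add: sum.remove)
    have aj: "a j = (\<Sum>i\<in>J. cscale (d i) (a i))"
      unfolding J_def d_def by (rule sum_cscale_eq_zero_solve[OF less(2) j c])
    define b' where "b' i = b i + cscale (d i) (b j)" for i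
    have J: "\<forall>i\<in>J. a i \<in> A \<and> b' i \<in> B"
      using less(3) j unfolding J_def b'_def by (auto intro: cv.subspace_add[OF B] cv.subspace_scale[OF B])
    have "(\<Sum>i\<in>J. kron (a i) (b' i)) = (\<Sum>i\<in>I. kron (a i) (b i))"
      unfolding b'_def split[of "\<lambda>i. kron (a i) (b i)"] aj
      by (simp add: kron_add_right kron_cscale_right kron_sum_left kron_cscale_left sum.distrib)
    moreover have "card J < card I"
      using j less(2) unfolding J_def by (metis card_Diff1_less)
    ultimately have "(\<Sum>i\<in>J. h (a i) (b' i)) = 0"
      using less J unfolding J_def by simp
    moreover have "(\<Sum>i\<in>J. h (a i) (b' i)) = (\<Sum>i\<in>I. h (a i) (b i))"
    proof -
      have "(\<Sum>i\<in>J. h (a i) (b' i)) = (\<Sum>i\<in>J. h (a i) (b i)) + (\<Sum>i\<in>J. d i * h (a i) (b j))"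
        using J less(3) j h_right cv.subspace_scale[OF B]
        unfolding b'_def J_def cfunctional_on_def by (simp add: sum.distrib)
      also have "(\<Sum>i\<in>J. d i * h (a i) (b j)) = h (a j) (b j)"
        unfolding aj using less(3) j J_def
        by (intro cfunctional_on_sum[OF A h_left, symmetric]) auto
      finally show ?thesis by (simp add: split add.commute)
    qed
    ultimately show ?thesis by simp
  qed
qed

lemma cbilinear_form_sum_kron_cong:
  fixes a b :: "'i \<Rightarrow> _" and c d :: "'j \<Rightarrow> _"
  assumes A: "cv.subspace A" and B: "cv.subspace B" and h: "cbilinear_form_on A B h"
    and fin: "finite I" "finite J"
    and ab: "\<forall>i\<in>I. a i \<in> A \<and> b i \<in> B" and cd: "\<forall>j\<in>J. c j \<in> A \<and> d j \<in> B"
    and eq: "(\<Sum>i\<in>I. kron (a i) (b i)) = (\<Sum>j\<in>J. kron (c j) (d j))"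
  shows "(\<Sum>i\<in>I. h (a i) (b i)) = (\<Sum>j\<in>J. h (c j) (d j))"
proof -
  define K where "K = Inl ` I \<union> Inr ` J"
  define a' where "a' = case_sum a c"
  define b' where "b' = case_sum b (\<lambda>j. - d j)"
  have sum_K: "(\<Sum>k\<in>K. f k) = (\<Sum>i\<in>I. f (Inl i)) + (\<Sum>j\<in>J. f (Inr j))"
    for f :: "_ \<Rightarrow> 'z::comm_monoid_add"
    unfolding K_def using fin by (subst sum.union_disjoint) (auto simp: sum.reindex)
  have K: "\<forall>k\<in>K. a' k \<in> A \<and> b' k \<in> B"
    using ab cd cv.subspace_neg[OF B] unfolding K_def a'_def b'_def by auto
  have "(\<Sum>k\<in>K. kron (a' k) (b' k)) = 0"
    using eq unfolding sum_K a'_def b'_def by (simp add: kron_minus_right sum_negf)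
  then have "(\<Sum>k\<in>K. h (a' k) (b' k)) = 0"
    using cbilinear_form_sum_kron_eq_zero[OF A B h _ K] fin K_def by simp
  moreover have "h (c j) (- d j) = - h (c j) (d j)" if "j \<in> J" for j
    using h cd that unfolding cbilinear_form_on_def cfunctional_on_def
    by (metis cv.scale_minus_left cv.scale_one mult_minus1)
  ultimately show ?thesis
    unfolding sum_K a'_def b'_def by (simp add: sum_negf eq_neg_iff_add_eq_0)
qed

lemma cbilinear_sum_kron_cong:
  fixes a b :: "'i \<Rightarrow> _" and c d :: "'j \<Rightarrow> _"
  assumes A: "cv.subspace A" and B: "cv.subspace B" and h: "cbilinear_on A B h"
    and fin: "finite I" "finite J"
    and ab: "\<forall>i\<in>I. a i \<in> A \<and> b i \<in> B" and cd: "\<forall>j\<in>J. c j \<in> A \<and> d j \<in> B"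
    and eq: "(\<Sum>i\<in>I. kron (a i) (b i)) = (\<Sum>j\<in>J. kron (c j) (d j))"
  shows "(\<Sum>i\<in>I. h (a i) (b i)) = (\<Sum>j\<in>J. h (c j) (d j))"
  using cbilinear_form_sum_kron_cong[OF A B cbilinear_on_entry[OF h] fin ab cd eq]
  by (simp add: vec_eq_iff)

lemma tensor_spaceE:
  assumes "X \<in> tensor_space A B"
  obtains k :: nat and a b where "\<forall>i<k. a i \<in> A \<and> b i \<in> B" "X = (\<Sum>i<k. kron (a i) (b i))"
  using assms unfolding tensor_space_def by blast

lemma tensor_ext_sum_kron_if_cong:
  fixes a b :: "'i \<Rightarrow> _"
  assumes fin: "finite I" and ab: "\<forall>i\<in>I. a i \<in> A \<and> b i \<in> B"
    and cong: "\<And>(k::nat) c d. \<forall>i<k. c i \<in> A \<and> d i \<in> B \<Longrightarrow>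
      (\<Sum>i\<in>I. kron (a i) (b i)) = (\<Sum>i<k. kron (c i) (d i)) \<Longrightarrow>
      (\<Sum>i\<in>I. h (a i) (b i)) = (\<Sum>i<k. h (c i) (d i))"
  shows "tensor_ext A B h (\<Sum>i\<in>I. kron (a i) (b i)) = (\<Sum>i\<in>I. h (a i) (b i))"
proof -
  let ?P = "\<lambda>Y. \<exists>(k::nat) c d. (\<forall>i<k. c i \<in> A \<and> d i \<in> B) \<and>
      (\<Sum>i\<in>I. kron (a i) (b i)) = (\<Sum>i<k. kron (c i) (d i)) \<and> Y = (\<Sum>i<k. h (c i) (d i))"
  obtain f where f: "bij_betw f {..<card I} I"
    using ex_bij_betw_nat_finite[OF fin] atLeast0LessThan by auto
  have reindex: "(\<Sum>i\<in>I. g i) = (\<Sum>i<card I. g (f i))" for g :: "'i \<Rightarrow> 'z::comm_monoid_add"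
    using sum.reindex_bij_betw[OF f, of g] by simp
  have "?P (\<Sum>i\<in>I. h (a i) (b i))"
    using ab f by (intro exI[of _ "card I"] exI[of _ "a \<circ> f"] exI[of _ "b \<circ> f"])
      (auto simp: reindex bij_betw_def)
  then have "?P (tensor_ext A B h (\<Sum>i\<in>I. kron (a i) (b i)))"
    unfolding tensor_ext_def by (rule someI)
  then obtain k c d where "\<forall>i<(k::nat). c i \<in> A \<and> d i \<in> B"
    and "(\<Sum>i\<in>I. kron (a i) (b i)) = (\<Sum>i<k. kron (c i) (d i))"
    and "tensor_ext A B h (\<Sum>i\<in>I. kron (a i) (b i)) = (\<Sum>i<k. h (c i) (d i))"
    by blast
  with cong show ?thesis by simp
qed

lemma tensor_ext_sum_kron_form:
  fixes a b :: "'i \<Rightarrow> _"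
  assumes A: "cv.subspace A" and B: "cv.subspace B" and h: "cbilinear_form_on A B h"
    and fin: "finite I" and ab: "\<forall>i\<in>I. a i \<in> A \<and> b i \<in> B"
  shows "tensor_ext A B h (\<Sum>i\<in>I. kron (a i) (b i)) = (\<Sum>i\<in>I. h (a i) (b i))"
  by (rule tensor_ext_sum_kron_if_cong[OF fin ab])
    (rule cbilinear_form_sum_kron_cong[OF A B h fin finite_lessThan ab], simp_all)

lemma tensor_ext_sum_kron:
  fixes a b :: "'i \<Rightarrow> _"
  assumes A: "cv.subspace A" and B: "cv.subspace B" and h: "cbilinear_on A B h"
    and fin: "finite I" and ab: "\<forall>i\<in>I. a i \<in> A \<and> b i \<in> B"
  shows "tensor_ext A B h (\<Sum>i\<in>I. kron (a i) (b i)) = (\<Sum>i\<in>I. h (a i) (b i))"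
  by (rule tensor_ext_sum_kron_if_cong[OF fin ab])
    (rule cbilinear_sum_kron_cong[OF A B h fin finite_lessThan ab], simp_all)

lemma tensor_ext_add:
  assumes A: "cv.subspace A" and B: "cv.subspace B" and h: "cbilinear_on A B h"
    and X: "X \<in> tensor_space A B" and Y: "Y \<in> tensor_space A B"
  shows "tensor_ext A B h (X + Y) = tensor_ext A B h X + tensor_ext A B h Y"
proof -
  obtain k a b where ab: "\<forall>i<(k::nat). a i \<in> A \<and> b i \<in> B" "X = (\<Sum>i<k. kron (a i) (b i))"
    using X by (rule tensor_spaceE)
  obtain l c d where cd: "\<forall>i<(l::nat). c i \<in> A \<and> d i \<in> B" "Y = (\<Sum>i<l. kron (c i) (d i))"
    using Y by (rule tensor_spaceE)
  let ?I = "Inl ` {..<k} \<union> Inr ` {..<l}"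
  have sum_I: "(\<Sum>p\<in>?I. f p) = (\<Sum>i<k. f (Inl i)) + (\<Sum>i<l. f (Inr i))"
    for f :: "_ \<Rightarrow> 'z::comm_monoid_add"
    by (subst sum.union_disjoint) (auto simp: sum.reindex)
  have "X + Y = (\<Sum>p\<in>?I. kron (case_sum a c p) (case_sum b d p))"
    unfolding ab(2) cd(2) sum_I by simp
  moreover have "\<forall>p\<in>?I. case_sum a c p \<in> A \<and> case_sum b d p \<in> B"
    using ab(1) cd(1) by auto
  ultimately have "tensor_ext A B h (X + Y) = (\<Sum>p\<in>?I. h (case_sum a c p) (case_sum b d p))"
    by (simp only: tensor_ext_sum_kron[OF A B h, of ?I] finite_UnI finite_imageI finite_lessThan)
  also have "\<dots> = tensor_ext A B h X + tensor_ext A B h Y"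
    using ab cd tensor_ext_sum_kron[OF A B h, of "{..<k}" a b] tensor_ext_sum_kron[OF A B h, of "{..<l}" c d]
    by (simp add: sum_I)
  finally show ?thesis .
qed

lemma tensor_ext_cscale:
  assumes A: "cv.subspace A" and B: "cv.subspace B" and h: "cbilinear_on A B h"
    and X: "X \<in> tensor_space A B"
  shows "tensor_ext A B h (cscale c X) = cscale c (tensor_ext A B h X)"
proof -
  obtain k a b where ab: "\<forall>i<(k::nat). a i \<in> A \<and> b i \<in> B" "X = (\<Sum>i<k. kron (a i) (b i))"
    using X by (rule tensor_spaceE)
  have "cscale c X = (\<Sum>i<k. kron (cscale c (a i)) (b i))"
    unfolding ab(2) by (simp add: cv.scale_sum_right kron_cscale_left)
  then have "tensor_ext A B h (cscale c X) = (\<Sum>i<k. h (cscale c (a i)) (b i))"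
    using ab(1) cv.subspace_scale[OF A] tensor_ext_sum_kron[OF A B h, of "{..<k}" "\<lambda>i. cscale c (a i)" b]
    by simp
  also have "\<dots> = (\<Sum>i<k. cscale c (h (a i) (b i)))"
    using h ab(1) unfolding cbilinear_on_def by simp
  also have "\<dots> = cscale c (tensor_ext A B h X)"
    using ab tensor_ext_sum_kron[OF A B h, of "{..<k}" a b] by (simp add: cv.scale_sum_right)
  finally show ?thesis .
qed

section \<open>Traces of left multiplications\<close>

definition matrix_unit :: "'b::finite \<Rightarrow> 'a::finite \<Rightarrow> complex^'a^'b" where
  "matrix_unit r s = (\<chi> i j. if i = r \<and> j = s then 1 else 0)"

lemma matrix_unit_expansion: "A = (\<Sum>p\<in>UNIV. cscale (A $ fst p $ snd p) (matrix_unit (fst p) (snd p)))"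
proof -
  have "(\<Sum>p\<in>UNIV. A $ fst p $ snd p * (if i = fst p \<and> j = snd p then 1 else 0)) = A $ i $ j" for i j
  proof -
    have "(\<Sum>p\<in>UNIV. A $ fst p $ snd p * (if i = fst p \<and> j = snd p then 1 else 0))
        = (\<Sum>p\<in>UNIV. if p = (i, j) then A $ fst p $ snd p else 0)"
      by (rule sum.cong) auto
    also have "\<dots> = A $ i $ j" by (simp add: sum.delta')
    finally show ?thesis .
  qed
  then show ?thesis by (simp add: vec_eq_iff matrix_unit_def)
qed

lemma span_matrix_units:
  "cv.span (range (\<lambda>p. matrix_unit (fst p) (snd p))) = (UNIV :: (complex^'a::finite^'b::finite) set)"
proof -
  have "A \<in> cv.span (range (\<lambda>p. matrix_unit (fst p) (snd p)))" for A :: "complex^'a^'b"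
    by (subst matrix_unit_expansion) (intro cv.span_sum cv.span_scale cv.span_base, auto)
  then show ?thesis by auto
qed

lemma cv_independent_finite: "cv.independent (B :: (complex^'a::finite^'b::finite) set) \<Longrightarrow> finite B"
  using cv.independent_span_bound[of "range (\<lambda>p. matrix_unit (fst p) (snd p))" B]
  by (simp add: span_matrix_units)

lemma cbasis_exists:
  fixes V :: "(complex^'a::finite^'a) set"
  assumes V: "cv.subspace V"
  obtains bs where "cbasis V bs"
proof -
  obtain B where B: "B \<subseteq> V" "cv.independent B" "V \<subseteq> cv.span B"
    by (rule cv.basis_exists)
  have finB: "finite B" using cv_independent_finite[OF B(2)] .
  obtain bs where bs: "set bs = B" "distinct bs" using finite_distinct_list[OF finB] by blast
  have bij: "bij_betw (nth bs) {..<length bs} B" using bs by (simp add: bij_betw_nth)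
  define idx where "idx = the_inv_into {..<length bs} (nth bs)"
  have idx: "idx (bs ! i) = i" if "i < length bs" for i
    unfolding idx_def using bij that by (simp add: bij_betw_def the_inv_into_f_f)
  have reindex: "(\<Sum>i<length bs. g (bs ! i)) = (\<Sum>v\<in>B. g v)" for g :: "_ \<Rightarrow> complex^'a^'a"
    by (rule sum.reindex_bij_betw[OF bij])
  have lincomb: "(\<Sum>i<length bs. cscale (c i) (bs ! i)) = (\<Sum>v\<in>B. cscale (c (idx v)) v)" for c
    by (subst reindex[symmetric]) (auto simp: idx intro: sum.cong)
  have "c i = 0" if "(\<Sum>i<length bs. cscale (c i) (bs ! i)) = 0" "i < length bs" for c i
    using cv.independentD[OF B(2) finB order_refl, of "\<lambda>v. c (idx v)" "bs ! i"] that
      nth_mem[OF that(2)] bs(1)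
    by (simp add: lincomb idx)
  moreover have "V = {(\<Sum>i<length bs. cscale (c i) (bs ! i)) | c. True}"
  proof
    show "V \<subseteq> {(\<Sum>i<length bs. cscale (c i) (bs ! i)) | c. True}"
    proof
      fix x assume "x \<in> V"
      then obtain u where "x = (\<Sum>v\<in>B. cscale (u v) v)"
        using B(3) cv.span_finite[OF finB] by blast
      then have "x = (\<Sum>i<length bs. cscale (u (bs ! i)) (bs ! i))"
        using reindex[of "\<lambda>v. cscale (u v) v"] by simp
      then show "x \<in> {(\<Sum>i<length bs. cscale (c i) (bs ! i)) | c. True}"
        by (auto intro!: exI[of _ "\<lambda>i. u (bs ! i)"])
    qed
    show "{(\<Sum>i<length bs. cscale (c i) (bs ! i)) | c. True} \<subseteq> V"
      using B(1) bs(1) by (auto intro!: cv.subspace_sum[OF V] cv.subspace_scale[OF V])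
  qed
  ultimately have "cbasis V bs" unfolding cbasis_def using B(1) bs(1) by blast
  then show ?thesis by (rule that)
qed

definition coord :: "(complex^'a::finite^'a) list \<Rightarrow> complex^'a^'a \<Rightarrow> nat \<Rightarrow> complex" where
  "coord bs v = (SOME c. v = (\<Sum>i<length bs. cscale (c i) (bs ! i)))"

lemma cbasis_coord:
  assumes "cbasis V bs" "v \<in> V"
  shows "v = (\<Sum>i<length bs. cscale (coord bs v i) (bs ! i))"
proof -
  have "\<exists>c. v = (\<Sum>i<length bs. cscale (c i) (bs ! i))" using assms unfolding cbasis_def by blast
  then show ?thesis unfolding coord_def by (rule someI_ex)
qed

lemma cbasis_nth_mem: "cbasis V bs \<Longrightarrow> i < length bs \<Longrightarrow> bs ! i \<in> V"
  unfolding cbasis_def by (meson nth_mem subsetD)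

lemma cbasis_subspace:
  assumes "cbasis V bs" shows "cv.subspace V"
proof -
  let ?comb = "\<lambda>c. (\<Sum>i<length bs. cscale (c i) (bs ! i))"
  have V: "V = range ?comb" using assms unfolding cbasis_def by auto
  show ?thesis
  proof (rule cv.subspaceI)
    show "0 \<in> V" unfolding V by (rule range_eqI[of _ _ "\<lambda>_. 0"]) simp
  next
    fix x y assume "x \<in> V" "y \<in> V"
    then obtain c d where "x = ?comb c" "y = ?comb d" unfolding V by blast
    then have "x + y = ?comb (\<lambda>i. c i + d i)" by (simp add: cv.scale_left_distrib sum.distrib)
    then show "x + y \<in> V" unfolding V by (rule range_eqI[where x = "\<lambda>i. c i + d i"])
  next
    fix a x assume "x \<in> V"
    then obtain c where "x = ?comb c" unfolding V by blast
    then have "cscale a x = ?comb (\<lambda>i. a * c i)" by (simp add: cv.scale_sum_right)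
    then show "cscale a x \<in> V" unfolding V by (rule range_eqI[where x = "\<lambda>i. a * c i"])
  qed
qed

lemma cbasis_coord_unique:
  assumes "cbasis V bs" "i < length bs"
    and "(\<Sum>i<length bs. cscale (u i) (bs ! i)) = (\<Sum>i<length bs. cscale (w i) (bs ! i))"
  shows "u i = w i"
proof -
  have zero: "(\<Sum>i<length bs. cscale (u i - w i) (bs ! i)) = 0"
    using assms(3) by (simp add: cv.scale_left_diff_distrib sum_subtractf)
  have indep: "\<forall>c. (\<Sum>i<length bs. cscale (c i) (bs ! i)) = 0 \<longrightarrow> (\<forall>i<length bs. c i = 0)"
    using assms(1) unfolding cbasis_def by blast
  have "u i - w i = 0" using indep[rule_format, OF zero assms(2)] .
  then show ?thesis by simp
qed

lemma sum_cscale_sum_cscale: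
  "(\<Sum>j\<in>J. cscale (a j) (\<Sum>k\<in>K. cscale (b j k) (x k))) = (\<Sum>k\<in>K. cscale (\<Sum>j\<in>J. a j * b j k) (x k))"
  by (simp add: vec_eq_iff sum_distrib_left sum_distrib_right mult.assoc) (intro allI sum.swap)

lemma cbasis_coord_change_inverse:
  assumes bs: "cbasis V bs" and bs': "cbasis V bs'" and l: "l < length bs" and j: "j < length bs"
  shows "(\<Sum>k<length bs'. coord bs' (bs ! l) k * coord bs (bs' ! k) j) = (if l = j then 1 else 0)"
proof -
  have "(\<Sum>j<length bs. cscale (\<Sum>k<length bs'. coord bs' (bs ! l) k * coord bs (bs' ! k) j) (bs ! j))
      = (\<Sum>k<length bs'. cscale (coord bs' (bs ! l) k)
          (\<Sum>j<length bs. cscale (coord bs (bs' ! k) j) (bs ! j)))"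
    by (simp add: sum_cscale_sum_cscale)
  also have "\<dots> = (\<Sum>k<length bs'. cscale (coord bs' (bs ! l) k) (bs' ! k))"
  proof (rule sum.cong[OF refl])
    fix k assume "k \<in> {..<length bs'}"
    then have "(\<Sum>j<length bs. cscale (coord bs (bs' ! k) j) (bs ! j)) = bs' ! k"
      by (intro cbasis_coord[OF bs cbasis_nth_mem[OF bs'], symmetric]) simp
    then show "cscale (coord bs' (bs ! l) k) (\<Sum>j<length bs. cscale (coord bs (bs' ! k) j) (bs ! j))
        = cscale (coord bs' (bs ! l) k) (bs' ! k)" by (rule arg_cong)
  qed
  also have "\<dots> = bs ! l"
    using cbasis_coord[OF bs' cbasis_nth_mem[OF bs l]] by simp
  also have "\<dots> = (\<Sum>j<length bs. cscale (if l = j then 1 else 0) (bs ! j))"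
    using l by (simp add: if_distrib[of "\<lambda>c. cscale c _"] sum.delta cong: if_cong)
  finally have "(\<Sum>j<length bs. cscale (\<Sum>k<length bs'. coord bs' (bs ! l) k * coord bs (bs' ! k) j) (bs ! j))
      = (\<Sum>j<length bs. cscale (if l = j then 1 else 0) (bs ! j))" .
  from cbasis_coord_unique[OF bs j this] show ?thesis by simp
qed

lemma lin_trace_basis_independent:
  assumes bs: "cbasis V bs" and bs': "cbasis V bs'" and L: "clinear_on V L"
    and c: "\<forall>i<length bs. L (bs ! i) = (\<Sum>j<length bs. cscale (c i j) (bs ! j))"
    and c': "\<forall>i<length bs'. L (bs' ! i) = (\<Sum>j<length bs'. cscale (c' i j) (bs' ! j))"
  shows "(\<Sum>i<length bs. c i i) = (\<Sum>i<length bs'. c' i i)"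
proof -
  define n where "n = length bs"
  define n' where "n' = length bs'"
  define P where "P i j = coord bs (bs' ! i) j" for i j
  define Q where "Q j k = coord bs' (bs ! j) k" for j k
  have P: "bs' ! i = (\<Sum>j<n. cscale (P i j) (bs ! j))" if "i < n'" for i
    unfolding P_def n_def using cbasis_coord[OF bs cbasis_nth_mem[OF bs']] that n'_def by simp
  have Q: "bs ! j = (\<Sum>k<n'. cscale (Q j k) (bs' ! k))" if "j < n" for j
    unfolding Q_def n'_def using cbasis_coord[OF bs' cbasis_nth_mem[OF bs]] that n_def by simp
  have QP: "(\<Sum>k<n'. Q l k * P k j) = (if l = j then 1 else 0)" if "l < n" "j < n" for l j
    using cbasis_coord_change_inverse[OF bs bs'] that unfolding P_def Q_def n_def n'_def .
  have c'_eq: "c' i k = (\<Sum>l<n. (\<Sum>j<n. P i j * c j l) * Q l k)" if "i < n'" "k < n'" for i k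
  proof -
    have "(\<Sum>k<n'. cscale (c' i k) (bs' ! k)) = L (bs' ! i)" using c' that unfolding n'_def by simp
    also have "\<dots> = (\<Sum>j<n. cscale (P i j) (L (bs ! j)))"
      unfolding P[OF that(1)] n_def
      by (rule clinear_on_sum[OF cbasis_subspace[OF bs] L cbasis_nth_mem[OF bs]]) simp
    also have "\<dots> = (\<Sum>l<n. cscale (\<Sum>j<n. P i j * c j l) (bs ! l))"
      using c unfolding n_def by (simp add: sum_cscale_sum_cscale)
    also have "\<dots> = (\<Sum>l<n. cscale (\<Sum>j<n. P i j * c j l) (\<Sum>k<n'. cscale (Q l k) (bs' ! k)))"
      by (rule sum.cong) (auto simp: Q[symmetric])
    also have "\<dots> = (\<Sum>k<n'. cscale (\<Sum>l<n. (\<Sum>j<n. P i j * c j l) * Q l k) (bs' ! k))"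
      by (rule sum_cscale_sum_cscale)
    finally have "(\<Sum>k<length bs'. cscale (c' i k) (bs' ! k))
        = (\<Sum>k<length bs'. cscale (\<Sum>l<n. (\<Sum>j<n. P i j * c j l) * Q l k) (bs' ! k))"
      unfolding n'_def .
    from cbasis_coord_unique[OF bs' _ this] show ?thesis using that(2) unfolding n'_def by simp
  qed
  have "(\<Sum>i<n'. c' i i) = (\<Sum>i<n'. \<Sum>l<n. \<Sum>j<n. P i j * c j l * Q l i)"
    by (rule sum.cong) (auto simp: c'_eq sum_distrib_right)
  also have "\<dots> = (\<Sum>l<n. \<Sum>i<n'. \<Sum>j<n. P i j * c j l * Q l i)"
    by (rule sum.swap)
  also have "\<dots> = (\<Sum>l<n. \<Sum>j<n. \<Sum>i<n'. P i j * c j l * Q l i)"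
    by (rule sum.cong[OF refl], rule sum.swap)
  also have "\<dots> = (\<Sum>l<n. \<Sum>j<n. c j l * (\<Sum>i<n'. Q l i * P i j))"
    by (simp add: sum_distrib_left mult_ac)
  also have "\<dots> = (\<Sum>l<n. c l l)"
    by (intro sum.cong) (auto simp: QP if_distrib[of "\<lambda>x. _ * x"] sum.delta cong: if_cong)
  finally show ?thesis unfolding n_def n'_def by simp
qed

lemma lin_trace_eq:
  assumes bs: "cbasis V bs" and L: "clinear_on V L"
    and c: "\<forall>i<length bs. L (bs ! i) = (\<Sum>j<length bs. cscale (c i j) (bs ! j))"
  shows "lin_trace V L = (\<Sum>i<length bs. c i i)"
  unfolding lin_trace_def
proof (rule the_equality)
  show "\<forall>bs' c'. cbasis V bs' \<and> (\<forall>i<length bs'. L (bs' ! i) = (\<Sum>j<length bs'. cscale (c' i j) (bs' ! j)))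
      \<longrightarrow> (\<Sum>i<length bs. c i i) = (\<Sum>i<length bs'. c' i i)"
    using lin_trace_basis_independent[OF bs _ L c] by blast
qed (use bs c in blast)

definition subalgebra :: "(complex^'a::finite^'a) set \<Rightarrow> bool" where
  "subalgebra V \<longleftrightarrow> cv.subspace V \<and> (\<forall>x\<in>V. \<forall>y\<in>V. x ** y \<in> V)"

lemma clinear_on_lmult: "clinear_on V (\<lambda>m. n ** m)"
  unfolding clinear_on_def by (simp add: matrix_add_ldistrib cscale_mult_right)

context
  fixes V :: "(complex^'a::finite^'a) set" and bs
  assumes V: "subalgebra V" and bs: "cbasis V bs"
begin

definition lmult_coord :: "complex^'a^'a \<Rightarrow> nat \<Rightarrow> nat \<Rightarrow> complex" where
  "lmult_coord n i j = coord bs (n ** bs ! i) j"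

lemma lmult_expansion:
  "n \<in> V \<Longrightarrow> i < length bs \<Longrightarrow> n ** bs ! i = (\<Sum>j<length bs. cscale (lmult_coord n i j) (bs ! j))"
  unfolding lmult_coord_def
  using V cbasis_nth_mem[OF bs] by (intro cbasis_coord[OF bs]) (auto simp: subalgebra_def)

lemma lin_trace_lmult:
  "n \<in> V \<Longrightarrow> lin_trace V (\<lambda>m. n ** m) = (\<Sum>i<length bs. lmult_coord n i i)"
  by (rule lin_trace_eq[OF bs clinear_on_lmult]) (simp add: lmult_expansion)

lemma lmult_mult_expansion:
  assumes x: "x \<in> V" and y: "y \<in> V" and i: "i < length bs"
  shows "(x ** y) ** bs ! i
    = (\<Sum>j<length bs. cscale (\<Sum>k<length bs. lmult_coord y i k * lmult_coord x k j) (bs ! j))"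
proof -
  have "(x ** y) ** bs ! i = x ** (\<Sum>k<length bs. cscale (lmult_coord y i k) (bs ! k))"
    using lmult_expansion[OF y i] by (simp add: matrix_mul_assoc[symmetric])
  also have "\<dots> = (\<Sum>k<length bs. cscale (lmult_coord y i k) (x ** bs ! k))"
    by (simp add: matrix_mult_sum cscale_mult_right)
  also have "\<dots> = (\<Sum>k<length bs. cscale (lmult_coord y i k)
      (\<Sum>j<length bs. cscale (lmult_coord x k j) (bs ! j)))"
    by (rule sum.cong) (auto simp: lmult_expansion[OF x])
  finally show ?thesis by (simp only: sum_cscale_sum_cscale)
qed

end


context
  fixes V :: "(complex^'a::finite^'a) set"
  assumes V: "subalgebra V"
begin

lemma lin_trace_lmult_add:
  assumes n: "n \<in> V" and n': "n' \<in> V"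
  shows "lin_trace V (\<lambda>m. (n + n') ** m) = lin_trace V (\<lambda>m. n ** m) + lin_trace V (\<lambda>m. n' ** m)"
proof -
  obtain bs where bs: "cbasis V bs" using V cbasis_exists unfolding subalgebra_def by blast
  have "\<forall>i<length bs. (n + n') ** bs ! i
      = (\<Sum>j<length bs. cscale (lmult_coord bs n i j + lmult_coord bs n' i j) (bs ! j))"
    using n n' by (simp add: matrix_add_rdistrib lmult_expansion[OF V bs] cv.scale_left_distrib sum.distrib)
  from lin_trace_eq[OF bs clinear_on_lmult this] show ?thesis
    using n n' by (simp add: lin_trace_lmult[OF V bs] sum.distrib)
qed

lemma lin_trace_lmult_cscale:
  assumes n: "n \<in> V"
  shows "lin_trace V (\<lambda>m. cscale c n ** m) = c * lin_trace V (\<lambda>m. n ** m)"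
proof -
  obtain bs where bs: "cbasis V bs" using V cbasis_exists unfolding subalgebra_def by blast
  have "\<forall>i<length bs. cscale c n ** bs ! i = (\<Sum>j<length bs. cscale (c * lmult_coord bs n i j) (bs ! j))"
    using n by (simp add: cscale_mult_left lmult_expansion[OF V bs] cv.scale_sum_right)
  from lin_trace_eq[OF bs clinear_on_lmult this] show ?thesis
    using n by (simp add: lin_trace_lmult[OF V bs] sum_distrib_left)
qed

lemma lin_trace_lmult_commute:
  assumes a: "a \<in> V" and b: "b \<in> V"
  shows "lin_trace V (\<lambda>m. (a ** b) ** m) = lin_trace V (\<lambda>m. (b ** a) ** m)"
proof -
  obtain bs where bs: "cbasis V bs" using V cbasis_exists unfolding subalgebra_def by blast
  let ?c = "lmult_coord bs"
  have "(\<Sum>i<length bs. \<Sum>k<length bs. ?c b i k * ?c a k i)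
      = (\<Sum>k<length bs. \<Sum>i<length bs. ?c b i k * ?c a k i)"
    by (rule sum.swap)
  also have "\<dots> = (\<Sum>i<length bs. \<Sum>k<length bs. ?c a i k * ?c b k i)"
    by (simp add: mult.commute)
  moreover have "lin_trace V (\<lambda>m. (x ** y) ** m)
      = (\<Sum>i<length bs. \<Sum>k<length bs. ?c y i k * ?c x k i)" if "x \<in> V" "y \<in> V" for x y
    using lmult_mult_expansion[OF V bs that] by (intro lin_trace_eq[OF bs clinear_on_lmult]) simp
  ultimately show ?thesis using a b by simp
qed

end

section \<open>Generalized counital bialgebras\<close>

locale counital_bialgebra =
  fixes M :: "(complex^'n::finite^'n) set"
    and \<Delta> :: "complex^'n^'n \<Rightarrow> complex^('n\<times>'n)^('n\<times>'n)"
    and S :: "complex^'n^'n \<Rightarrow> complex^'n^'n"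
  assumes bialgebra: "gen_coinv_bialg M \<Delta> S"
    and counital: "counital M \<Delta> S"
begin

abbreviation "e \<equiv> unit_e \<Delta>"
abbreviation "Nt \<equiv> N_t M \<Delta>"
abbreviation "Ns \<equiv> N_s M \<Delta>"
abbreviation "et \<equiv> eps_t M \<Delta> S"
abbreviation "es \<equiv> eps_s M \<Delta> S"
abbreviation "S_tensor \<equiv> tensor_ext M M (\<lambda>a b. kron (S a) (S b))"

lemma M_star_subalg: "is_star_subalg M"
  using bialgebra unfolding gen_coinv_bialg_def by blast

lemma M_subspace: "cv.subspace M"
  using M_star_subalg unfolding is_star_subalg_def cv.subspace_def by blast

lemma one_M [simp]: "mat 1 \<in> M"
  and M_mult: "x \<in> M \<Longrightarrow> y \<in> M \<Longrightarrow> x ** y \<in> M"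
  and M_cscale: "x \<in> M \<Longrightarrow> cscale c x \<in> M"
  and M_adj: "x \<in> M \<Longrightarrow> adj x \<in> M"
  using M_star_subalg unfolding is_star_subalg_def by blast+

lemma Delta_clinear: "clinear_on M \<Delta>"
  and Delta_tensor_space: "x \<in> M \<Longrightarrow> \<Delta> x \<in> tensor_space M M"
  and Delta_mult: "x \<in> M \<Longrightarrow> y \<in> M \<Longrightarrow> \<Delta> (x ** y) = \<Delta> x ** \<Delta> y"
  and Delta_adj: "x \<in> M \<Longrightarrow> \<Delta> (adj x) = adj (\<Delta> x)"
  and S_clinear: "clinear_on M S"
  and S_M: "x \<in> M \<Longrightarrow> S x \<in> M"
  and S_one [simp]: "S (mat 1) = mat 1"
  and S_mult: "x \<in> M \<Longrightarrow> y \<in> M \<Longrightarrow> S (x ** y) = S y ** S x"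
  and S_adj: "x \<in> M \<Longrightarrow> S (adj x) = adj (S x)"
  and S_S: "x \<in> M \<Longrightarrow> S (S x) = x"
  and S_tensor_Delta: "x \<in> M \<Longrightarrow> S_tensor (\<Delta> x) = flip (\<Delta> (S x))"
  using bialgebra unfolding gen_coinv_bialg_def bij_betw_def by blast+

lemma eps_t_one: "et (mat 1) = mat 1"
  and eps_t_mem_N_t: "x \<in> M \<Longrightarrow> et x \<in> Nt"
  and counit_N_s: "w \<in> Ns \<Longrightarrow> tensor_ext M M (\<lambda>a b. kron a (et b)) (\<Delta> w) = e ** kron w (mat 1)"
  using counital unfolding counital_def by blast+

lemma S_sum:
  "(\<And>i. i \<in> I \<Longrightarrow> x i \<in> M) \<Longrightarrow> S (\<Sum>i\<in>I. cscale (c i) (x i)) = (\<Sum>i\<in>I. cscale (c i) (S (x i)))"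
  by (rule clinear_on_sum[OF M_subspace S_clinear])

lemma unit_e_tensor_space: "e \<in> tensor_space M M"
  unfolding unit_e_def by (rule Delta_tensor_space) simp

lemma Delta_mult_unit_e: "x \<in> M \<Longrightarrow> \<Delta> x ** e = \<Delta> x"
  unfolding unit_e_def using Delta_mult[of x "mat 1"] by simp

lemma unit_e_mult_Delta: "x \<in> M \<Longrightarrow> e ** \<Delta> x = \<Delta> x"
  unfolding unit_e_def using Delta_mult[of "mat 1" x] by simp

lemma unit_e_idem: "e ** e = e"
  using unit_e_mult_Delta[of "mat 1"] unfolding unit_e_def by simp

lemma adj_unit_e: "adj e = e"
  unfolding unit_e_def using Delta_adj[of "mat 1"] by simp

lemma S_tensor_sum_kron:
  "finite I \<Longrightarrow> \<forall>i\<in>I. a i \<in> M \<and> b i \<in> M \<Longrightarrow>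
   S_tensor (\<Sum>i\<in>I. kron (a i) (b i)) = (\<Sum>i\<in>I. kron (S (a i)) (S (b i)))"
  by (rule tensor_ext_sum_kron[OF M_subspace M_subspace cbilinear_on_kron[OF S_clinear S_clinear]])

lemma Delta_S_sum_kron:
  assumes x: "x \<in> M" and fin: "finite I" and ab: "\<forall>i\<in>I. a i \<in> M \<and> b i \<in> M"
    and Delta: "\<Delta> x = (\<Sum>i\<in>I. kron (a i) (b i))"
  shows "\<Delta> (S x) = (\<Sum>i\<in>I. kron (S (b i)) (S (a i)))"
proof -
  have "flip (\<Delta> (S x)) = (\<Sum>i\<in>I. kron (S (a i)) (S (b i)))"
    using S_tensor_Delta[OF x] S_tensor_sum_kron[OF fin ab] Delta by simp
  then show ?thesis by (simp add: flip_eq_iff flip_sum)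
qed

lemma Delta_S: "x \<in> M \<Longrightarrow> \<Delta> (S x) = flip (S_tensor (\<Delta> x))"
  by (simp add: S_tensor_Delta)

lemma S_tensor_unit_e: "S_tensor e = flip e"
  unfolding unit_e_def using S_tensor_Delta[of "mat 1"] by simp

lemma S_tensor_mult_kron:
  assumes X: "X \<in> tensor_space M M" and u: "u \<in> M" and v: "v \<in> M"
  shows "S_tensor (X ** kron u v) = kron (S u) (S v) ** S_tensor X"
    and "S_tensor (kron u v ** X) = S_tensor X ** kron (S u) (S v)"
proof -
  obtain k a b where ab: "\<forall>i<(k::nat). a i \<in> M \<and> b i \<in> M" "X = (\<Sum>i<k. kron (a i) (b i))"
    using X by (rule tensor_spaceE)
  show "S_tensor (X ** kron u v) = kron (S u) (S v) ** S_tensor X"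
    using ab u v
    by (simp add: sum_kron_mult_kron kron_mult_sum_kron S_tensor_sum_kron M_mult S_mult)
  show "S_tensor (kron u v ** X) = S_tensor X ** kron (S u) (S v)"
    using ab u v
    by (simp add: sum_kron_mult_kron kron_mult_sum_kron S_tensor_sum_kron M_mult S_mult)
qed

lemma N_t_M: "x \<in> Nt \<Longrightarrow> x \<in> M"
  and N_t_Delta: "x \<in> Nt \<Longrightarrow> \<Delta> x = e ** kron x (mat 1)"
  and N_t_Delta': "x \<in> Nt \<Longrightarrow> \<Delta> x = kron x (mat 1) ** e"
  unfolding N_t_def by blast+

lemma N_s_M: "x \<in> Ns \<Longrightarrow> x \<in> M"
  and N_s_Delta: "x \<in> Ns \<Longrightarrow> \<Delta> x = e ** kron (mat 1) x"
  and N_s_Delta': "x \<in> Ns \<Longrightarrow> \<Delta> x = kron (mat 1) x ** e"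
  unfolding N_s_def by blast+

lemma one_N_t [simp]: "mat 1 \<in> Nt"
  and one_N_s [simp]: "mat 1 \<in> Ns"
  unfolding N_t_def N_s_def unit_e_def by (simp_all add: kron_one)

lemma N_t_subspace: "cv.subspace Nt"
  using Delta_clinear clinear_on_zero[OF M_subspace Delta_clinear] cv.subspace_0[OF M_subspace]
  unfolding cv.subspace_def N_t_def clinear_on_def
  by (auto simp: matrix_add_ldistrib matrix_add_rdistrib kron_add_left cscale_mult_left
      cscale_mult_right kron_cscale_left M_cscale M_subspace cv.subspace_add)

lemma N_s_subspace: "cv.subspace Ns"
  using Delta_clinear clinear_on_zero[OF M_subspace Delta_clinear] cv.subspace_0[OF M_subspace]
  unfolding cv.subspace_def N_s_def clinear_on_def
  by (auto simp: matrix_add_ldistrib matrix_add_rdistrib kron_add_right cscale_mult_left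
      cscale_mult_right kron_cscale_right M_cscale M_subspace cv.subspace_add)

lemma N_t_mult: assumes x: "x \<in> Nt" and y: "y \<in> Nt" shows "x ** y \<in> Nt"
proof -
  have "\<Delta> (x ** y) = (kron x (mat 1) ** e) ** (e ** kron y (mat 1))"
    using Delta_mult[OF N_t_M[OF x] N_t_M[OF y]] N_t_Delta[OF y] N_t_Delta'[OF x] by simp
  moreover have "kron x (mat 1) ** e = e ** kron x (mat 1)" "kron y (mat 1) ** e = e ** kron y (mat 1)"
    using N_t_Delta N_t_Delta' x y by metis+
  note mult_commuting_idempotent[OF unit_e_idem this]
  ultimately show ?thesis
    using N_t_M M_mult x y unfolding N_t_def by (simp add: kron_mult)
qed

lemma N_t_subalgebra: "subalgebra Nt"
  using N_t_subspace N_t_mult unfolding subalgebra_def by blast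

lemma N_t_adj: assumes x: "x \<in> Nt" shows "adj x \<in> Nt"
proof -
  have "\<Delta> (adj x) = adj (e ** kron x (mat 1))" "\<Delta> (adj x) = adj (kron x (mat 1) ** e)"
    using Delta_adj[OF N_t_M[OF x]] N_t_Delta[OF x] N_t_Delta'[OF x] by simp_all
  then show ?thesis
    using M_adj[OF N_t_M[OF x]] unfolding N_t_def by (simp add: adj_mult adj_kron adj_unit_e)
qed

lemma N_s_adj: assumes x: "x \<in> Ns" shows "adj x \<in> Ns"
proof -
  have "\<Delta> (adj x) = adj (e ** kron (mat 1) x)" "\<Delta> (adj x) = adj (kron (mat 1) x ** e)"
    using Delta_adj[OF N_s_M[OF x]] N_s_Delta[OF x] N_s_Delta'[OF x] by simp_all
  then show ?thesis
    using M_adj[OF N_s_M[OF x]] unfolding N_s_def by (simp add: adj_mult adj_kron adj_unit_e)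
qed

lemma S_N_t: assumes z: "z \<in> Nt" shows "S z \<in> Ns"
proof -
  have "\<Delta> (S z) = kron (mat 1) (S z) ** e"
    using S_tensor_mult_kron(1)[OF unit_e_tensor_space N_t_M[OF z] one_M]
    by (simp add: Delta_S N_t_M[OF z] N_t_Delta[OF z] S_tensor_unit_e flip_mult)
  moreover have "\<Delta> (S z) = e ** kron (mat 1) (S z)"
    using S_tensor_mult_kron(2)[OF unit_e_tensor_space N_t_M[OF z] one_M]
    by (simp add: Delta_S N_t_M[OF z] N_t_Delta'[OF z] S_tensor_unit_e flip_mult)
  ultimately show ?thesis
    using S_M[OF N_t_M[OF z]] unfolding N_s_def by blast
qed

lemma S_N_s: assumes w: "w \<in> Ns" shows "S w \<in> Nt"
proof -
  have "\<Delta> (S w) = kron (S w) (mat 1) ** e"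
    using S_tensor_mult_kron(1)[OF unit_e_tensor_space one_M N_s_M[OF w]]
    by (simp add: Delta_S N_s_M[OF w] N_s_Delta[OF w] S_tensor_unit_e flip_mult)
  moreover have "\<Delta> (S w) = e ** kron (S w) (mat 1)"
    using S_tensor_mult_kron(2)[OF unit_e_tensor_space one_M N_s_M[OF w]]
    by (simp add: Delta_S N_s_M[OF w] N_s_Delta'[OF w] S_tensor_unit_e flip_mult)
  ultimately show ?thesis
    using S_M[OF N_s_M[OF w]] unfolding N_t_def by blast
qed

lemma eps_t_sum_kron:
  "finite I \<Longrightarrow> \<forall>i\<in>I. a i \<in> M \<and> b i \<in> M \<Longrightarrow> \<Delta> x = (\<Sum>i\<in>I. kron (a i) (b i)) \<Longrightarrow>
   et x = (\<Sum>i\<in>I. a i ** S (b i))"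
  unfolding eps_t_def
  by (simp add: tensor_ext_sum_kron[OF M_subspace M_subspace cbilinear_on_mult[OF clinear_on_id S_clinear]])

lemma eps_s_sum_kron:
  "finite I \<Longrightarrow> \<forall>i\<in>I. a i \<in> M \<and> b i \<in> M \<Longrightarrow> \<Delta> x = (\<Sum>i\<in>I. kron (a i) (b i)) \<Longrightarrow>
   es x = (\<Sum>i\<in>I. S (a i) ** b i)"
  unfolding eps_s_def
  by (simp add: tensor_ext_sum_kron[OF M_subspace M_subspace cbilinear_on_mult[OF S_clinear clinear_on_id]])

lemma eps_t_clinear: "clinear_on M et"
  using Delta_clinear unfolding clinear_on_def eps_t_def
  by (simp add: tensor_ext_add tensor_ext_cscale M_subspace Delta_tensor_space
      cbilinear_on_mult[OF clinear_on_id S_clinear])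

lemma eps_s_clinear: "clinear_on M es"
  using Delta_clinear unfolding clinear_on_def eps_s_def
  by (simp add: tensor_ext_add tensor_ext_cscale M_subspace Delta_tensor_space
      cbilinear_on_mult[OF S_clinear clinear_on_id])

lemma eps_t_M: "x \<in> M \<Longrightarrow> et x \<in> M"
  using eps_t_mem_N_t N_t_M by blast

lemma eps_t_N_s_mult:
  assumes w: "w \<in> Ns" and y: "y \<in> M"
  shows "et (w ** y) = et y ** S w"
proof -
  obtain k c d where cd: "\<forall>i<(k::nat). c i \<in> M \<and> d i \<in> M" "\<Delta> y = (\<Sum>i<k. kron (c i) (d i))"
    using Delta_tensor_space[OF y] by (rule tensor_spaceE)
  have "\<Delta> (w ** y) = kron (mat 1) w ** \<Delta> y"
    using Delta_mult[OF N_s_M[OF w] y] N_s_Delta'[OF w] unit_e_mult_Delta[OF y]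
    by (simp add: matrix_mul_assoc[symmetric])
  then have "\<Delta> (w ** y) = (\<Sum>i<k. kron (c i) (w ** d i))"
    by (simp add: cd(2) kron_mult_sum_kron)
  then have "et (w ** y) = (\<Sum>i<k. c i ** S (w ** d i))"
    by (rule eps_t_sum_kron[rotated 2]) (use cd(1) N_s_M[OF w] M_mult in auto)
  also have "\<dots> = (\<Sum>i<k. (c i ** S (d i)) ** S w)"
    using cd(1) N_s_M[OF w] by (intro sum.cong) (auto simp: S_mult matrix_mul_assoc)
  also have "\<dots> = et y ** S w"
    using eps_t_sum_kron[OF _ _ cd(2)] cd(1) by (simp add: matrix_sum_mult)
  finally show ?thesis .
qed

lemma eps_t_N_t_mult:
  assumes z: "z \<in> Nt" and y: "y \<in> M"
  shows "et (z ** y) = z ** et y"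
proof -
  obtain k c d where cd: "\<forall>i<(k::nat). c i \<in> M \<and> d i \<in> M" "\<Delta> y = (\<Sum>i<k. kron (c i) (d i))"
    using Delta_tensor_space[OF y] by (rule tensor_spaceE)
  have "\<Delta> (z ** y) = kron z (mat 1) ** \<Delta> y"
    using Delta_mult[OF N_t_M[OF z] y] N_t_Delta'[OF z] unit_e_mult_Delta[OF y]
    by (simp add: matrix_mul_assoc[symmetric])
  then have "\<Delta> (z ** y) = (\<Sum>i<k. kron (z ** c i) (d i))"
    by (simp add: cd(2) kron_mult_sum_kron)
  then have "et (z ** y) = (\<Sum>i<k. (z ** c i) ** S (d i))"
    by (rule eps_t_sum_kron[rotated 2]) (use cd(1) N_t_M[OF z] M_mult in auto)
  also have "\<dots> = z ** et y"
    using eps_t_sum_kron[OF _ _ cd(2)] cd(1) by (simp add: matrix_mult_sum matrix_mul_assoc)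
  finally show ?thesis .
qed

lemma eps_t_N_t: "z \<in> Nt \<Longrightarrow> et z = z"
  using eps_t_N_t_mult[of z "mat 1"] eps_t_one by simp

definition adjoint_action :: "complex^'n^'n \<Rightarrow> complex^'n^'n \<Rightarrow> complex^'n^'n" where
  "adjoint_action x m = tensor_ext M M (\<lambda>a b. a ** m ** S b) (\<Delta> x)"

lemma adjoint_action_sum_kron:
  assumes "finite I" "\<forall>i\<in>I. a i \<in> M \<and> b i \<in> M" "\<Delta> x = (\<Sum>i\<in>I. kron (a i) (b i))"
  shows "adjoint_action x m = (\<Sum>i\<in>I. a i ** m ** S (b i))"
proof -
  have "clinear_on M (\<lambda>a. a ** m)"
    unfolding clinear_on_def by (simp add: matrix_add_rdistrib cscale_mult_left)
  from cbilinear_on_mult[OF this S_clinear] show ?thesis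
    unfolding adjoint_action_def assms(3) using assms(1,2) by (rule tensor_ext_sum_kron[OF M_subspace M_subspace])
qed

lemma eps_t_mult:
  assumes x: "x \<in> M" and y: "y \<in> M"
  shows "et (x ** y) = adjoint_action x (et y)"
proof -
  obtain k a b where ab: "\<forall>i<(k::nat). a i \<in> M \<and> b i \<in> M" "\<Delta> x = (\<Sum>i<k. kron (a i) (b i))"
    using Delta_tensor_space[OF x] by (rule tensor_spaceE)
  obtain l c d where cd: "\<forall>j<(l::nat). c j \<in> M \<and> d j \<in> M" "\<Delta> y = (\<Sum>j<l. kron (c j) (d j))"
    using Delta_tensor_space[OF y] by (rule tensor_spaceE)
  have "\<Delta> (x ** y) = (\<Sum>i<k. \<Sum>j<l. kron (a i ** c j) (b i ** d j))"
    using Delta_mult[OF x y] unfolding ab(2) cd(2)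
    by (simp add: matrix_sum_mult matrix_mult_sum kron_mult) (rule sum.swap)
  also have "\<dots> = (\<Sum>p\<in>{..<k} \<times> {..<l}. kron (a (fst p) ** c (snd p)) (b (fst p) ** d (snd p)))"
    by (simp add: sum.cartesian_product case_prod_beta)
  finally have "et (x ** y) = (\<Sum>p\<in>{..<k} \<times> {..<l}. (a (fst p) ** c (snd p)) ** S (b (fst p) ** d (snd p)))"
    by (rule eps_t_sum_kron[rotated 2]) (use ab(1) cd(1) M_mult in auto)
  also have "\<dots> = (\<Sum>p\<in>{..<k} \<times> {..<l}. a (fst p) ** (c (snd p) ** S (d (snd p))) ** S (b (fst p)))"
    using ab(1) cd(1) by (intro sum.cong) (auto simp: S_mult matrix_mul_assoc)
  also have "\<dots> = (\<Sum>i<k. a i ** (\<Sum>j<l. c j ** S (d j)) ** S (b i))"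
    by (simp add: sum.cartesian_product case_prod_beta matrix_sum_mult matrix_mult_sum)
  also have "\<dots> = adjoint_action x (et y)"
    using eps_t_sum_kron[OF _ _ cd(2)] adjoint_action_sum_kron[OF _ _ ab(2)] ab(1) cd(1) by simp
  finally show ?thesis .
qed

lemma eps_t_mult_N_s:
  assumes x: "x \<in> M" and w: "w \<in> Ns"
  shows "et (x ** w) = adjoint_action x (S w)"
proof -
  obtain k a b where ab: "\<forall>i<(k::nat). a i \<in> M \<and> b i \<in> M" "\<Delta> x = (\<Sum>i<k. kron (a i) (b i))"
    using Delta_tensor_space[OF x] by (rule tensor_spaceE)
  have "\<Delta> (x ** w) = \<Delta> x ** kron (mat 1) w"
    using Delta_mult[OF x N_s_M[OF w]] N_s_Delta[OF w] Delta_mult_unit_e[OF x]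
    by (simp add: matrix_mul_assoc)
  then have "\<Delta> (x ** w) = (\<Sum>i<k. kron (a i) (b i ** w))"
    by (simp add: ab(2) sum_kron_mult_kron)
  then have "et (x ** w) = (\<Sum>i<k. a i ** S (b i ** w))"
    by (rule eps_t_sum_kron[rotated 2]) (use ab(1) N_s_M[OF w] M_mult in auto)
  also have "\<dots> = (\<Sum>i<k. a i ** S w ** S (b i))"
    using ab(1) N_s_M[OF w] by (intro sum.cong) (auto simp: S_mult matrix_mul_assoc)
  also have "\<dots> = adjoint_action x (S w)"
    using adjoint_action_sum_kron[OF _ _ ab(2)] ab(1) by simp
  finally show ?thesis .
qed

lemma unit_e_decomposition:
  obtains k :: nat and p q where "\<forall>i<k. p i \<in> Ns \<and> q i \<in> Nt" "e = (\<Sum>i<k. kron (p i) (q i))"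
proof -
  obtain k a b where ab: "\<forall>i<(k::nat). a i \<in> M \<and> b i \<in> M" "e = (\<Sum>i<k. kron (a i) (b i))"
    using unit_e_tensor_space by (rule tensor_spaceE)
  have counit_e: "e = tensor_ext M M (\<lambda>a b. kron a (et b)) e"
    using counit_N_s[OF one_N_s] unfolding unit_e_def by (simp add: kron_one)
  have counit_sum_kron: "e = (\<Sum>i<k. kron (c i) (et (d i)))"
    if "\<forall>i<k. c i \<in> M \<and> d i \<in> M" "e = (\<Sum>i<k. kron (c i) (d i))" for c d
    using that counit_e
    by (simp add: tensor_ext_sum_kron[OF M_subspace M_subspace cbilinear_on_kron[OF clinear_on_id eps_t_clinear]])
  have "e = flip (\<Sum>i<k. kron (S (a i)) (S (et (b i))))"
    using S_tensor_unit_e S_tensor_sum_kron[of "{..<k}" a "\<lambda>i. et (b i)"] counit_sum_kron[OF ab] ab(1) eps_t_M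
    by (simp add: flip_eq_iff)
  then have "e = (\<Sum>i<k. kron (S (et (b i))) (S (a i)))"
    by (simp add: flip_sum)
  then have "e = (\<Sum>i<k. kron (S (et (b i))) (et (S (a i))))"
    using counit_sum_kron[of "\<lambda>i. S (et (b i))" "\<lambda>i. S (a i)"] ab(1) eps_t_M S_M by simp
  moreover have "\<forall>i<k. S (et (b i)) \<in> Ns \<and> et (S (a i)) \<in> Nt"
    using ab(1) S_N_t eps_t_mem_N_t S_M by blast
  ultimately show ?thesis by (rule that[rotated])
qed

abbreviation "\<theta> \<equiv> theta_t M \<Delta>"
abbreviation "\<epsilon> \<equiv> canonical_eps M \<Delta> S"

lemma theta_t_add: "a \<in> Nt \<Longrightarrow> b \<in> Nt \<Longrightarrow> \<theta> (a + b) = \<theta> a + \<theta> b"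
  unfolding theta_t_def by (rule lin_trace_lmult_add[OF N_t_subalgebra])

lemma theta_t_cscale: "a \<in> Nt \<Longrightarrow> \<theta> (cscale c a) = c * \<theta> a"
  unfolding theta_t_def by (rule lin_trace_lmult_cscale[OF N_t_subalgebra])

lemma theta_t_commute: "a \<in> Nt \<Longrightarrow> b \<in> Nt \<Longrightarrow> \<theta> (a ** b) = \<theta> (b ** a)"
  unfolding theta_t_def by (rule lin_trace_lmult_commute[OF N_t_subalgebra])

lemma theta_t_cfunctional: "cfunctional_on Nt \<theta>"
  unfolding cfunctional_on_def using theta_t_add theta_t_cscale by blast

lemma theta_t_sum:
  "(\<And>i. i \<in> I \<Longrightarrow> x i \<in> Nt) \<Longrightarrow> \<theta> (\<Sum>i\<in>I. cscale (c i) (x i)) = (\<Sum>i\<in>I. c i * \<theta> (x i))"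
  by (rule cfunctional_on_sum[OF N_t_subspace theta_t_cfunctional])

lemma canonical_eps_cfunctional: "cfunctional_on M \<epsilon>"
  using eps_t_clinear eps_t_mem_N_t M_cscale cv.subspace_add[OF M_subspace]
  unfolding cfunctional_on_def clinear_on_def canonical_eps_def
  by (simp add: theta_t_add theta_t_cscale)

lemma canonical_eps_sum:
  "(\<And>i. i \<in> I \<Longrightarrow> x i \<in> M) \<Longrightarrow> \<epsilon> (\<Sum>i\<in>I. cscale (c i) (x i)) = (\<Sum>i\<in>I. c i * \<epsilon> (x i))"
  by (rule cfunctional_on_sum[OF M_subspace canonical_eps_cfunctional])

end

section \<open>The canonical counit\<close>

locale canonical_right_counit = counital_bialgebra +
  assumes right_counit: "\<forall>x\<in>M. tensor_ext M M (\<lambda>a b. cscale (canonical_eps M \<Delta> S b) a) (\<Delta> x) = x"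
begin

lemma right_counit_sum_kron:
  assumes x: "x \<in> M" and fin: "finite I" and ab: "\<forall>i\<in>I. a i \<in> M \<and> b i \<in> M"
    and Delta: "\<Delta> x = (\<Sum>i\<in>I. kron (a i) (b i))"
  shows "x = (\<Sum>i\<in>I. cscale (\<epsilon> (b i)) (a i))"
proof -
  have "x = tensor_ext M M (\<lambda>a b. cscale (\<epsilon> b) a) (\<Delta> x)" using right_counit x by simp
  also have "\<dots> = (\<Sum>i\<in>I. cscale (\<epsilon> (b i)) (a i))"
    unfolding Delta by (rule tensor_ext_sum_kron[OF M_subspace M_subspace
      cbilinear_on_cscale_right[OF clinear_on_id canonical_eps_cfunctional] fin ab])
  finally show ?thesis .
qed

lemma right_counit_S_sum_kron:
  assumes x: "x \<in> M" and fin: "finite I" and ab: "\<forall>i\<in>I. a i \<in> M \<and> b i \<in> M"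
    and Delta: "\<Delta> x = (\<Sum>i\<in>I. kron (a i) (b i))"
  shows "x = (\<Sum>i\<in>I. cscale (\<epsilon> (S (a i))) (b i))"
proof -
  have "S x = (\<Sum>i\<in>I. cscale (\<epsilon> (S (a i))) (S (b i)))"
    using ab S_M
    by (intro right_counit_sum_kron[OF S_M[OF x] fin] Delta_S_sum_kron[OF x fin ab Delta]) auto
  then have "S (S x) = (\<Sum>i\<in>I. cscale (\<epsilon> (S (a i))) (S (S (b i))))"
    using ab S_M by (simp add: S_sum)
  then show ?thesis using ab S_S x by simp
qed

lemma canonical_eps_S: assumes x: "x \<in> M" shows "\<epsilon> (S x) = \<epsilon> x"
proof -
  obtain k a b where ab: "\<forall>i<(k::nat). a i \<in> M \<and> b i \<in> M" "\<Delta> x = (\<Sum>i<k. kron (a i) (b i))"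
    using Delta_tensor_space[OF x] by (rule tensor_spaceE)
  have "\<epsilon> (S x) = \<epsilon> (S (\<Sum>i<k. cscale (\<epsilon> (b i)) (a i)))"
    using right_counit_sum_kron[OF x _ _ ab(2)] ab(1) by simp
  also have "\<dots> = \<epsilon> (\<Sum>i<k. cscale (\<epsilon> (b i)) (S (a i)))"
    by (subst S_sum) (use ab(1) in auto)
  also have "\<dots> = (\<Sum>i<k. \<epsilon> (b i) * \<epsilon> (S (a i)))"
    by (rule canonical_eps_sum) (use ab(1) S_M in auto)
  also have "\<dots> = \<epsilon> (\<Sum>i<k. cscale (\<epsilon> (S (a i))) (b i))"
    by (subst canonical_eps_sum) (use ab(1) in \<open>auto simp: mult.commute\<close>)
  also have "\<dots> = \<epsilon> x"
    using right_counit_S_sum_kron[OF x _ _ ab(2)] ab(1) by simp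
  finally show ?thesis .
qed

lemma left_counit: assumes x: "x \<in> M" shows "tensor_ext M M (\<lambda>a b. cscale (\<epsilon> a) b) (\<Delta> x) = x"
proof -
  obtain k a b where ab: "\<forall>i<(k::nat). a i \<in> M \<and> b i \<in> M" "\<Delta> x = (\<Sum>i<k. kron (a i) (b i))"
    using Delta_tensor_space[OF x] by (rule tensor_spaceE)
  have "tensor_ext M M (\<lambda>a b. cscale (\<epsilon> a) b) (\<Delta> x) = (\<Sum>i<k. cscale (\<epsilon> (a i)) (b i))"
    unfolding ab(2) by (rule tensor_ext_sum_kron[OF M_subspace M_subspace
      cbilinear_on_cscale_left[OF canonical_eps_cfunctional clinear_on_id]]) (use ab(1) in auto)
  also have "\<dots> = x"
    using right_counit_S_sum_kron[OF x _ _ ab(2)] ab(1) canonical_eps_S by simp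
  finally show ?thesis .
qed

lemma left_counit_sum_kron:
  assumes x: "x \<in> M" and fin: "finite I" and ab: "\<forall>i\<in>I. a i \<in> M \<and> b i \<in> M"
    and Delta: "\<Delta> x = (\<Sum>i\<in>I. kron (a i) (b i))"
  shows "x = (\<Sum>i\<in>I. cscale (\<epsilon> (a i)) (b i))"
  using right_counit_S_sum_kron[OF assms] ab canonical_eps_S by simp

lemma eps_t_adj: assumes x: "x \<in> M" shows "et (adj x) = adj (et (S x))"
proof -
  obtain k a b where ab: "\<forall>i<(k::nat). a i \<in> M \<and> b i \<in> M" "\<Delta> x = (\<Sum>i<k. kron (a i) (b i))"
    using Delta_tensor_space[OF x] by (rule tensor_spaceE)
  have "\<Delta> (adj x) = (\<Sum>i<k. kron (adj (a i)) (adj (b i)))"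
    using Delta_adj[OF x] unfolding ab(2) by (simp add: adj_sum adj_kron)
  then have "et (adj x) = (\<Sum>i<k. adj (a i) ** S (adj (b i)))"
    by (rule eps_t_sum_kron[rotated 2]) (use ab(1) M_adj in auto)
  also have "\<dots> = adj (\<Sum>i<k. S (b i) ** a i)"
    using ab(1) by (simp add: adj_sum S_adj adj_mult)
  also have "(\<Sum>i<k. S (b i) ** a i) = et (S x)"
    using eps_t_sum_kron[OF _ _ Delta_S_sum_kron[OF x _ _ ab(2)]] ab(1) S_M S_S by simp
  finally show ?thesis .
qed

lemma eps_s_eq: assumes y: "y \<in> M" shows "es y = S (et (S y))"
proof -
  obtain k c d where cd: "\<forall>i<(k::nat). c i \<in> M \<and> d i \<in> M" "\<Delta> y = (\<Sum>i<k. kron (c i) (d i))"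
    using Delta_tensor_space[OF y] by (rule tensor_spaceE)
  have "et (S y) = (\<Sum>i<k. S (d i) ** c i)"
    using eps_t_sum_kron[OF _ _ Delta_S_sum_kron[OF y _ _ cd(2)]] cd(1) S_M S_S by simp
  then have "S (et (S y)) = S (\<Sum>i<k. cscale 1 (S (d i) ** c i))" by simp
  also have "\<dots> = (\<Sum>i<k. cscale 1 (S (S (d i) ** c i)))"
    by (rule S_sum) (use cd(1) S_M M_mult in auto)
  also have "\<dots> = (\<Sum>i<k. S (c i) ** d i)"
    using cd(1) by (intro sum.cong) (auto simp: S_mult S_M S_S)
  also have "\<dots> = es y"
    using eps_s_sum_kron[OF _ _ cd(2)] cd(1) by simp
  finally show ?thesis by simp
qed

context
  fixes k :: nat and p q
  assumes p_q_mem: "\<forall>i<k. p i \<in> Ns \<and> q i \<in> Nt"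
    and unit_e_eq: "e = (\<Sum>i<k. kron (p i) (q i))"
begin

lemma p_N_s: "i < k \<Longrightarrow> p i \<in> Ns"
  and q_N_t: "i < k \<Longrightarrow> q i \<in> Nt"
  and p_M: "i < k \<Longrightarrow> p i \<in> M"
  and q_M: "i < k \<Longrightarrow> q i \<in> M"
  using p_q_mem N_s_M N_t_M by blast+

text \<open>The \<open>p i\<close> and \<open>q i\<close> are dual bases with respect to \<open>\<theta>\<close>: this is the right counit
  property for \<open>S z \<in> N_s\<close>, whose coproduct is \<open>(1 \<otimes> S z) e\<close>.\<close>

lemma S_N_t_expansion:
  assumes z: "z \<in> Nt"
  shows "S z = (\<Sum>i<k. cscale (\<theta> (q i ** z)) (p i))"
proof -
  have w: "S z \<in> Ns" using S_N_t[OF z] .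
  have "\<Delta> (S z) = (\<Sum>i<k. kron (p i) (S z ** q i))"
    using N_s_Delta'[OF w] unfolding unit_e_eq kron_mult_sum_kron by simp
  then have "S z = (\<Sum>i<k. cscale (\<epsilon> (S z ** q i)) (p i))"
    by (rule right_counit_sum_kron[OF N_s_M[OF w], rotated 2]) (use p_M q_M N_s_M[OF w] M_mult in auto)
  also have "\<dots> = (\<Sum>i<k. cscale (\<theta> (q i ** z)) (p i))"
  proof (rule sum.cong[OF refl])
    fix i assume "i \<in> {..<k}"
    then have "\<epsilon> (S z ** q i) = \<theta> (q i ** z)"
      using eps_t_N_s_mult[OF w q_M] eps_t_N_t[OF q_N_t] S_S[OF N_t_M[OF z]]
      by (simp add: canonical_eps_def)
    then show "cscale (\<epsilon> (S z ** q i)) (p i) = cscale (\<theta> (q i ** z)) (p i)" by simp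
  qed
  finally show ?thesis .
qed

lemma unit_e_flip_eq: "e = (\<Sum>i<k. kron (S (q i)) (S (p i)))"
proof -
  have "flip e = (\<Sum>i<k. kron (S (p i)) (S (q i)))"
    using S_tensor_unit_e S_tensor_sum_kron[of "{..<k}" p q] unit_e_eq p_M q_M by simp
  then show ?thesis by (simp add: flip_eq_iff flip_sum)
qed

lemma sum_kron_S_p_q_flip: "(\<Sum>i<k. kron (S (p i)) (q i)) = (\<Sum>i<k. kron (q i) (S (p i)))"
proof -
  have "cbilinear_on Ns Nt (\<lambda>a b. kron (S a) b)"
    by (rule cbilinear_on_kron[OF clinear_on_subset[OF S_clinear] clinear_on_id]) (auto simp: N_s_M)
  then have "(\<Sum>i<k. kron (S (p i)) (q i)) = (\<Sum>i<k. kron (S (S (q i))) (S (p i)))"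
    by (rule cbilinear_sum_kron_cong[OF N_s_subspace N_t_subspace])
      (use p_q_mem S_N_t S_N_s unit_e_eq unit_e_flip_eq in auto)
  also have "\<dots> = (\<Sum>i<k. kron (q i) (S (p i)))" using q_M S_S by simp
  finally show ?thesis .
qed

lemma N_t_expansion:
  assumes y: "y \<in> Nt"
  shows "y = (\<Sum>i<k. cscale (\<theta> (S (p i) ** y)) (q i))"
proof -
  have "y = S (S y)" using S_S N_t_M[OF y] by simp
  also have "\<dots> = (\<Sum>i<k. cscale (\<theta> (q i ** y)) (S (p i)))"
    unfolding S_N_t_expansion[OF y] by (rule S_sum) (use p_M in auto)
  also have "\<dots> = (\<Sum>i<k. cscale (\<theta> (S (p i) ** y)) (q i))"
  proof -
    have "cfunctional_on Nt (\<lambda>b. \<theta> (b ** y))"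
      unfolding cfunctional_on_def using y N_t_mult theta_t_add theta_t_cscale
      by (simp add: matrix_add_rdistrib cscale_mult_left)
    from cbilinear_on_cscale_right[OF clinear_on_id this] show ?thesis
      by (rule cbilinear_sum_kron_cong[OF N_t_subspace N_t_subspace _ _ _ _ _ sum_kron_S_p_q_flip])
        (use p_q_mem S_N_s in auto)
  qed
  finally show ?thesis .
qed

lemma one_expansion_adj: "mat 1 = (\<Sum>i<k. cscale (cnj (\<theta> (adj (q i)))) (S (p i)))"
proof -
  have adj_unit_e_eq: "e = (\<Sum>i<k. kron (adj (p i)) (adj (q i)))"
    using adj_unit_e unfolding unit_e_eq by (simp add: adj_sum adj_kron)
  have "mat 1 = (\<Sum>i<k. cscale (\<theta> (q i)) (p i))"
    using S_N_t_expansion[OF one_N_t] by simp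
  also have "\<dots> = (\<Sum>i<k. cscale (\<theta> (adj (q i))) (adj (p i)))"
    by (rule cbilinear_sum_kron_cong[OF N_s_subspace N_t_subspace
          cbilinear_on_cscale_right[OF clinear_on_id theta_t_cfunctional]])
      (use p_q_mem N_s_adj N_t_adj unit_e_eq adj_unit_e_eq in auto)
  finally have "adj (mat 1) = adj (\<Sum>i<k. cscale (\<theta> (adj (q i))) (adj (p i)))"
    by (rule arg_cong)
  then have "mat 1 = (\<Sum>i<k. cscale (cnj (\<theta> (adj (q i)))) (p i))"
    by (simp add: adj_sum adj_cscale)
  then have "S (mat 1) = S (\<Sum>i<k. cscale (cnj (\<theta> (adj (q i)))) (p i))"
    by (rule arg_cong)
  also have "\<dots> = (\<Sum>i<k. cscale (cnj (\<theta> (adj (q i)))) (S (p i)))"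
    by (rule S_sum) (use p_M in auto)
  finally show ?thesis by simp
qed

lemma theta_t_adj: assumes y: "y \<in> Nt" shows "\<theta> (adj y) = cnj (\<theta> y)"
proof -
  have "y = mat 1 ** y" by simp
  also have "\<dots> = (\<Sum>i<k. cscale (cnj (\<theta> (adj (q i)))) (S (p i) ** y))"
    by (subst one_expansion_adj) (simp add: matrix_sum_mult cscale_mult_left)
  finally have "\<theta> y = \<theta> (\<Sum>i<k. cscale (cnj (\<theta> (adj (q i)))) (S (p i) ** y))"
    by (rule arg_cong)
  also have "\<dots> = (\<Sum>i<k. cnj (\<theta> (adj (q i))) * \<theta> (S (p i) ** y))"
    by (rule theta_t_sum) (use S_N_s p_N_s y N_t_mult in auto)
  finally have theta_y: "\<theta> y = (\<Sum>i<k. cnj (\<theta> (adj (q i))) * \<theta> (S (p i) ** y))" .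
  have "adj y = adj (\<Sum>i<k. cscale (\<theta> (S (p i) ** y)) (q i))"
    using N_t_expansion[OF y] by (rule arg_cong)
  also have "\<dots> = (\<Sum>i<k. cscale (cnj (\<theta> (S (p i) ** y))) (adj (q i)))"
    by (simp add: adj_sum adj_cscale)
  finally have "\<theta> (adj y) = \<theta> (\<Sum>i<k. cscale (cnj (\<theta> (S (p i) ** y))) (adj (q i)))"
    by (rule arg_cong)
  also have "\<dots> = (\<Sum>i<k. cnj (\<theta> (S (p i) ** y)) * \<theta> (adj (q i)))"
    by (rule theta_t_sum) (use q_N_t N_t_adj in auto)
  finally show ?thesis using theta_y by (simp add: mult.commute)
qed

lemma canonical_eps_adj: assumes x: "x \<in> M" shows "\<epsilon> (adj x) = cnj (\<epsilon> x)"
proof -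
  have "\<epsilon> (adj x) = \<theta> (adj (et (S x)))"
    using eps_t_adj[OF x] by (simp add: canonical_eps_def)
  also have "\<dots> = cnj (\<epsilon> (S x))"
    using theta_t_adj[OF eps_t_mem_N_t[OF S_M[OF x]]] by (simp add: canonical_eps_def)
  finally show ?thesis using canonical_eps_S[OF x] by simp
qed

lemma canonical_eps_mult_unit_e:
  assumes x: "x \<in> M" and y: "y \<in> M"
  shows "tensor_ext M M (\<lambda>a b. \<epsilon> a * \<epsilon> b) (kron x (mat 1) ** e ** kron (mat 1) y) = \<epsilon> (x ** y)"
proof -
  define z where "z = et y"
  have z: "z \<in> Nt" unfolding z_def by (rule eps_t_mem_N_t[OF y])
  have "kron x (mat 1) ** e ** kron (mat 1) y = (\<Sum>i<k. kron (x ** p i) (q i ** y))"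
    unfolding unit_e_eq by (simp add: kron_mult_sum_kron sum_kron_mult_kron)
  then have "tensor_ext M M (\<lambda>a b. \<epsilon> a * \<epsilon> b) (kron x (mat 1) ** e ** kron (mat 1) y)
      = (\<Sum>i<k. \<epsilon> (x ** p i) * \<epsilon> (q i ** y))"
    using x y p_M q_M M_mult
    by (simp add: tensor_ext_sum_kron_form[OF M_subspace M_subspace
          cbilinear_form_on_mult[OF canonical_eps_cfunctional canonical_eps_cfunctional]])
  also have "\<dots> = (\<Sum>i<k. \<theta> (q i ** z) * \<epsilon> (x ** p i))"
    by (intro sum.cong) (auto simp: canonical_eps_def z_def eps_t_N_t_mult[OF q_N_t y] mult.commute)
  also have "\<dots> = \<epsilon> (\<Sum>i<k. cscale (\<theta> (q i ** z)) (x ** p i))"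
    by (rule canonical_eps_sum[symmetric]) (use x p_M M_mult in auto)
  also have "(\<Sum>i<k. cscale (\<theta> (q i ** z)) (x ** p i)) = x ** S z"
    unfolding S_N_t_expansion[OF z] by (simp add: matrix_mult_sum cscale_mult_right)
  also have "\<epsilon> (x ** S z) = \<theta> (adjoint_action x z)"
    using eps_t_mult_N_s[OF x S_N_t[OF z]] S_S[OF N_t_M[OF z]] by (simp add: canonical_eps_def)
  also have "\<dots> = \<epsilon> (x ** y)"
    using eps_t_mult[OF x y] unfolding z_def by (simp add: canonical_eps_def)
  finally show ?thesis .
qed

lemma eps_t_expansion:
  assumes v: "v \<in> M" shows "et v = (\<Sum>i<k. cscale (\<epsilon> (p i ** v)) (q i))"
proof -
  have "et v = (\<Sum>i<k. cscale (\<theta> (S (p i) ** et v)) (q i))"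
    by (rule N_t_expansion[OF eps_t_mem_N_t[OF v]])
  also have "\<dots> = (\<Sum>i<k. cscale (\<epsilon> (p i ** v)) (q i))"
  proof (rule sum.cong[OF refl])
    fix i assume "i \<in> {..<k}"
    then have "\<epsilon> (p i ** v) = \<theta> (S (p i) ** et v)"
      using eps_t_N_s_mult[OF p_N_s v] theta_t_commute[OF eps_t_mem_N_t[OF v] S_N_s[OF p_N_s]]
      by (simp add: canonical_eps_def)
    then show "cscale (\<theta> (S (p i) ** et v)) (q i) = cscale (\<epsilon> (p i ** v)) (q i)" by simp
  qed
  finally show ?thesis .
qed

lemma eps_s_expansion:
  assumes y: "y \<in> M" shows "es y = (\<Sum>i<k. cscale (\<epsilon> (y ** q i)) (p i))"
proof -
  have "es y = S (\<Sum>i<k. cscale (\<epsilon> (p i ** S y)) (q i))"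
    using eps_s_eq[OF y] eps_t_expansion[OF S_M[OF y]] by simp
  also have "\<dots> = (\<Sum>i<k. cscale (\<epsilon> (p i ** S y)) (S (q i)))"
    by (rule S_sum) (use q_M in auto)
  also have "\<dots> = (\<Sum>i<k. cscale (\<epsilon> (y ** S (p i))) (S (q i)))"
  proof (rule sum.cong[OF refl])
    fix i assume "i \<in> {..<k}"
    then have "\<epsilon> (p i ** S y) = \<epsilon> (y ** S (p i))"
      using canonical_eps_S[OF M_mult[OF y S_M[OF p_M]]] S_mult[OF y S_M[OF p_M]] S_S[OF p_M]
      by simp
    then show "cscale (\<epsilon> (p i ** S y)) (S (q i)) = cscale (\<epsilon> (y ** S (p i))) (S (q i))" by simp
  qed
  also have "\<dots> = (\<Sum>i<k. cscale (\<epsilon> (y ** q i)) (p i))"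
  proof -
    have "cfunctional_on Nt (\<lambda>b. \<epsilon> (y ** b))"
      using y N_t_M M_mult canonical_eps_cfunctional unfolding cfunctional_on_def
      by (simp add: matrix_add_ldistrib cscale_mult_right)
    from cbilinear_on_cscale_right[OF clinear_on_id this] show ?thesis
      by (rule cbilinear_sum_kron_cong[OF N_s_subspace N_t_subspace])
        (use p_q_mem S_N_t S_N_s unit_e_eq unit_e_flip_eq in auto)
  qed
  finally show ?thesis .
qed

lemma eps_s_counit:
  assumes x: "x \<in> M"
  shows "tensor_ext M M (\<lambda>a b. kron (es a) b) (\<Delta> x) = kron (mat 1) x ** e"
proof -
  obtain l a b where ab: "\<forall>j<(l::nat). a j \<in> M \<and> b j \<in> M" "\<Delta> x = (\<Sum>j<l. kron (a j) (b j))"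
    using Delta_tensor_space[OF x] by (rule tensor_spaceE)
  have x_q: "x ** q i = (\<Sum>j<l. cscale (\<epsilon> (a j ** q i)) (b j))" if i: "i < k" for i
  proof -
    have "\<Delta> (x ** q i) = \<Delta> x ** kron (q i) (mat 1)"
      using Delta_mult[OF x q_M[OF i]] N_t_Delta[OF q_N_t[OF i]] Delta_mult_unit_e[OF x]
      by (simp add: matrix_mul_assoc)
    then have "\<Delta> (x ** q i) = (\<Sum>j<l. kron (a j ** q i) (b j))"
      by (simp add: ab(2) sum_kron_mult_kron)
    then show ?thesis
      by (rule left_counit_sum_kron[OF M_mult[OF x q_M[OF i]], rotated 2])
        (use ab(1) q_M[OF i] M_mult in auto)
  qed
  have "tensor_ext M M (\<lambda>a b. kron (es a) b) (\<Delta> x) = (\<Sum>j<l. kron (es (a j)) (b j))"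
    unfolding ab(2)
    by (rule tensor_ext_sum_kron[OF M_subspace M_subspace cbilinear_on_kron[OF eps_s_clinear clinear_on_id]])
      (use ab(1) in auto)
  also have "\<dots> = (\<Sum>j<l. \<Sum>i<k. cscale (\<epsilon> (a j ** q i)) (kron (p i) (b j)))"
    using ab(1) by (intro sum.cong) (auto simp: eps_s_expansion kron_sum_left kron_cscale_left)
  also have "\<dots> = (\<Sum>i<k. kron (p i) (\<Sum>j<l. cscale (\<epsilon> (a j ** q i)) (b j)))"
    by (subst sum.swap) (simp add: kron_sum_right kron_cscale_right)
  also have "\<dots> = kron (mat 1) x ** e"
    unfolding unit_e_eq by (simp add: x_q kron_mult_sum_kron)
  finally show ?thesis .
qed

end

end

theorem theorem2p6p1:
  fixes M :: "(complex^'n::finite^'n) set"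
    and \<Delta> :: "complex^'n^'n \<Rightarrow> complex^('n\<times>'n)^('n\<times>'n)"
    and S :: "complex^'n^'n \<Rightarrow> complex^'n^'n"
  assumes "gen_coinv_bialg M \<Delta> S"
    and "counital M \<Delta> S"
  shows "weak_kac M \<Delta> S (canonical_eps M \<Delta> S) \<longleftrightarrow>
    (\<forall>x\<in>M. tensor_ext M M (\<lambda>a b. cscale (canonical_eps M \<Delta> S b) a) (\<Delta> x) = x)"
proof
  assume "weak_kac M \<Delta> S (canonical_eps M \<Delta> S)"
  then show "\<forall>x\<in>M. tensor_ext M M (\<lambda>a b. cscale (canonical_eps M \<Delta> S b) a) (\<Delta> x) = x"
    unfolding weak_kac_def by blast
next
  assume right_counit: "\<forall>x\<in>M. tensor_ext M M (\<lambda>a b. cscale (canonical_eps M \<Delta> S b) a) (\<Delta> x) = x"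
  interpret canonical_right_counit M \<Delta> S
    using assms right_counit by unfold_locales
  obtain k p q where "\<forall>i<(k::nat). p i \<in> N_s M \<Delta> \<and> q i \<in> N_t M \<Delta>" "unit_e \<Delta> = (\<Sum>i<k. kron (p i) (q i))"
    by (rule unit_e_decomposition)
  then show "weak_kac M \<Delta> S (canonical_eps M \<Delta> S)"
    unfolding weak_kac_def
    using assms(1) right_counit canonical_eps_cfunctional left_counit canonical_eps_S
      canonical_eps_adj canonical_eps_mult_unit_e eps_s_counit
    by blast
qed

end
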